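(* For every integer $n\geq 0$, the elements $A^iB^jC^k\alpha^r\beta^s\gamma^t$ with $i,j,k,r,s,t\geq 0$ and $i+j+k+r+s+t\leq n$ form a basis for the $\mathbb F$-vector space $\Delta_n$.
   Context: Let $\mathbb F$ be a field and fix a nonzero $q\in\mathbb F$ with $q^4\neq 1$. The universal Askey--Wilson algebra $\Delta$ is the associative $\mathbb F$-algebra with 1 with generators $A,B,C$ subject to the relations that each of $A+\frac{qBC-q^{-1}CB}{q^2-q^{-2}}$, $B+\frac{qCA-q^{-1}AC}{q^2-q^{-2}}$, $C+\frac{qAB-q^{-1}BA}{q^2-q^{-2}}$ is central; $\alpha,\beta,\gamma$ denote these three central elements (in order) each multiplied by $q+q^{-1}$. For subspaces $H,K$ let $HK$ be the span of all $hk$, $h\in H$, $k\in K$. Define subspaces $\Delta_0=\mathbb F1$, $\Delta_1=\Delta_0+{\rm Span}\{A,B,C,\alpha,\beta,\gamma\}$, and $\Delta_n=\Delta_1\Delta_{n-1}$ for $n\geq 1$. *)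

theory Defs
  imports Main
begin

text \<open>The free associative algebra over a field 'k on the letters A, B, C,
  realised as functions from words to coefficients, with concatenation
  (convolution) product.\<close>

datatype gen = GA | GB | GC

type_synonym 'k fa = "gen list \<Rightarrow> 'k"

definition fa_poly :: "('k::field) fa set" where
  "fa_poly = {f. finite {w. f w \<noteq> 0}}"

definition fa_one :: "('k::field) fa" where
  "fa_one = (\<lambda>w. if w = [] then 1 else 0)"

definition fa_gen :: "gen \<Rightarrow> ('k::field) fa" where
  "fa_gen x = (\<lambda>w. if w = [x] then 1 else 0)"

definition fa_add :: "('k::field) fa \<Rightarrow> 'k fa \<Rightarrow> 'k fa" where
  "fa_add f g = (\<lambda>w. f w + g w)"

definition fa_diff :: "('k::field) fa \<Rightarrow> 'k fa \<Rightarrow> 'k fa" where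
  "fa_diff f g = (\<lambda>w. f w - g w)"

definition fa_smul :: "'k::field \<Rightarrow> 'k fa \<Rightarrow> 'k fa" where
  "fa_smul c f = (\<lambda>w. c * f w)"

definition fa_mul :: "('k::field) fa \<Rightarrow> 'k fa \<Rightarrow> 'k fa" where
  "fa_mul f g = (\<lambda>w. \<Sum>i\<le>length w. f (take i w) * g (drop i w))"

primrec fa_pow :: "('k::field) fa \<Rightarrow> nat \<Rightarrow> 'k fa" where
  "fa_pow f 0 = fa_one"
| "fa_pow f (Suc n) = fa_mul f (fa_pow f n)"

definition fa_span :: "('k::field) fa set \<Rightarrow> 'k fa set" where
  "fa_span S = {f. \<exists>T c. finite T \<and> T \<subseteq> S \<and> f = (\<lambda>w. \<Sum>s\<in>T. c s * s w)}"

abbreviation "AWA \<equiv> fa_gen GA"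
abbreviation "AWB \<equiv> fa_gen GB"
abbreviation "AWC \<equiv> fa_gen GC"

definition aw_central :: "'k::field \<Rightarrow> 'k fa \<Rightarrow> 'k fa \<Rightarrow> 'k fa \<Rightarrow> 'k fa" where
  "aw_central q X Y Z = fa_smul (q + inverse q)
     (fa_add X (fa_smul (inverse (q^2 - inverse q ^ 2))
        (fa_diff (fa_smul q (fa_mul Y Z)) (fa_smul (inverse q) (fa_mul Z Y)))))"

definition aw_alpha :: "'k::field \<Rightarrow> 'k fa" where
  "aw_alpha q = aw_central q AWA AWB AWC"
definition aw_beta :: "'k::field \<Rightarrow> 'k fa" where
  "aw_beta q = aw_central q AWB AWC AWA"
definition aw_gamma :: "'k::field \<Rightarrow> 'k fa" where
  "aw_gamma q = aw_central q AWC AWA AWB"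

definition aw_rels :: "'k::field \<Rightarrow> 'k fa set" where
  "aw_rels q = {fa_diff (fa_mul x z) (fa_mul z x) | x z.
      x \<in> {AWA, AWB, AWC} \<and> z \<in> {aw_alpha q, aw_beta q, aw_gamma q}}"

text \<open>The two-sided ideal generated by the relations; Delta = free algebra / ideal.\<close>
definition aw_ideal :: "'k::field \<Rightarrow> 'k fa set" where
  "aw_ideal q = fa_span {fa_mul (fa_mul a r) b | a r b.
      a \<in> fa_poly \<and> b \<in> fa_poly \<and> r \<in> aw_rels q}"

text \<open>Lifts of the filtration: Delta_0 = F1, Delta_1 = Delta_0 + span{A,B,C,alpha,beta,gamma},
  Delta_n = Delta_1 Delta_(n-1). The subspace Delta_n of Delta is the image of aw_D q n.\<close>
definition aw_D1 :: "'k::field \<Rightarrow> 'k fa set" where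
  "aw_D1 q = fa_span {fa_one, AWA, AWB, AWC, aw_alpha q, aw_beta q, aw_gamma q}"

primrec aw_D :: "'k::field \<Rightarrow> nat \<Rightarrow> 'k fa set" where
  "aw_D q 0 = fa_span {fa_one}"
| "aw_D q (Suc n) = fa_span {fa_mul h k | h k. h \<in> aw_D1 q \<and> k \<in> aw_D q n}"

definition aw_mono :: "'k::field \<Rightarrow> nat \<times> nat \<times> nat \<times> nat \<times> nat \<times> nat \<Rightarrow> 'k fa" where
  "aw_mono q = (\<lambda>(i, j, k, r, s, t).
     fa_mul (fa_pow AWA i) (fa_mul (fa_pow AWB j) (fa_mul (fa_pow AWC k)
       (fa_mul (fa_pow (aw_alpha q) r) (fa_mul (fa_pow (aw_beta q) s) (fa_pow (aw_gamma q) t))))))"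

definition idx_le :: "nat \<Rightarrow> (nat \<times> nat \<times> nat \<times> nat \<times> nat \<times> nat) set" where
  "idx_le n = {(i, j, k, r, s, t). i + j + k + r + s + t \<le> n}"

end

theory Submission
  imports Defs
begin

text \<open>
  Left multiplication by a generator sends a monomial of degree at most n, modulo
  the ideal, into the span of the monomials of degree at most n+1. For A and for the central
  elements this is immediate. For B and C, the letter is moved to the right past the powers
  of A and B with the q-commutation relations
    BA = q^2 AB - (q^2 - 1) gamma + (q^3 - q^-1) C,
    CA = q^-2 AC + (1 - q^-2) beta - (q - q^-3) B,
    CB = q^2 BC - (q^2 - 1) alpha + (q^3 - q^-1) A,
  which are the definitions of gamma, beta, alpha solved for BA, CA, CB; the coefficients
  produced are recorded by a recursively defined function.

  The same coefficients define an action of the free algebra on the space with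
  basis the exponent tuples, in which A, alpha, beta, gamma raise i, r, s, t. Under this
  action the three relations hold, so alpha, beta, gamma act centrally and the ideal acts as
  zero; but the monomial with exponent tuple m maps the basis vector of (0,...,0) to that of m.
\<close>

section \<open>Finitely supported vectors\<close>

definition unit_vec :: "'a \<Rightarrow> 'a \<Rightarrow> 'k::field" where
  "unit_vec m = (\<lambda>w. if w = m then 1 else 0)"

definition fin :: "('a \<Rightarrow> 'k::field) \<Rightarrow> bool" where
  "fin v \<longleftrightarrow> finite {m. v m \<noteq> 0}"

text \<open>Meaningful only for finitely supported v: a sum over an infinite set is 0.\<close>
definition lin :: "('a \<Rightarrow> 'b \<Rightarrow> 'k::field) \<Rightarrow> ('a \<Rightarrow> 'k) \<Rightarrow> 'b \<Rightarrow> 'k" where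
  "lin f v = (\<lambda>w. \<Sum>m\<in>{m. v m \<noteq> 0}. v m * f m w)"

lemma lin_eq_sum: "finite S \<Longrightarrow> {m. v m \<noteq> 0} \<subseteq> S \<Longrightarrow> lin f v w = (\<Sum>m\<in>S. v m * f m w)"
  unfolding lin_def by (rule sum.mono_neutral_left) auto

lemma lin_unit_vec [simp]: "lin f (unit_vec m) = f m"
proof
  fix w show "lin f (unit_vec m) w = f m w"
    by (subst lin_eq_sum[of "{m}"]) (auto simp: unit_vec_def)
qed

lemma lin_unit_vec_id: "fin f \<Longrightarrow> lin unit_vec f = f"
proof
  fix w assume "fin f"
  have "lin unit_vec f w = (\<Sum>m\<in>{m. f m \<noteq> 0}. if m = w then f m else 0)"
    by (auto simp: lin_def unit_vec_def intro!: sum.cong)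
  also have "\<dots> = f w" using \<open>fin f\<close> by (subst sum.delta) (auto simp: fin_def)
  finally show "lin unit_vec f w = f w" .
qed

lemma fin_unit_vec [simp]: "fin (unit_vec m)"
  by (simp add: fin_def unit_vec_def)

lemma fin_zero [simp]: "fin (\<lambda>w. 0)"
  by (simp add: fin_def)

lemma fin_add [simp]: "fin u \<Longrightarrow> fin v \<Longrightarrow> fin (\<lambda>w. u w + v w)"
  unfolding fin_def by (rule finite_subset[of _ "{m. u m \<noteq> 0} \<union> {m. v m \<noteq> 0}"]) auto

lemma fin_diff [simp]: "fin u \<Longrightarrow> fin v \<Longrightarrow> fin (\<lambda>w. u w - v w)"
  unfolding fin_def by (rule finite_subset[of _ "{m. u m \<noteq> 0} \<union> {m. v m \<noteq> 0}"]) auto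

lemma fin_smul [simp]: "fin u \<Longrightarrow> fin (\<lambda>w. c * u w)"
  unfolding fin_def by (rule finite_subset[of _ "{m. u m \<noteq> 0}"]) auto

lemma fin_sum: "finite T \<Longrightarrow> (\<And>s. s \<in> T \<Longrightarrow> fin (g s)) \<Longrightarrow> fin (\<lambda>w. \<Sum>s\<in>T. c s * g s w)"
  by (induction T rule: finite_induct) auto

lemma fin_lin [simp]:
  assumes "fin v" "\<And>m. fin (f m)"
  shows "fin (lin f v)"
proof -
  have "{x. lin f v x \<noteq> 0} \<subseteq> (\<Union>m\<in>{m. v m \<noteq> 0}. {x. f m x \<noteq> 0})"
  proof
    fix x assume "x \<in> {x. lin f v x \<noteq> 0}"
    then obtain m where "v m \<noteq> 0" "v m * f m x \<noteq> 0"
      unfolding lin_def by (auto elim: sum.not_neutral_contains_not_neutral)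
    then show "x \<in> (\<Union>m\<in>{m. v m \<noteq> 0}. {x. f m x \<noteq> 0})" by auto
  qed
  moreover have "finite (\<Union>m\<in>{m. v m \<noteq> 0}. {x. f m x \<noteq> 0})"
    using assms by (auto simp: fin_def)
  ultimately show ?thesis unfolding fin_def by (rule finite_subset)
qed

lemma lin_add:
  assumes "fin u" "fin v"
  shows "lin f (\<lambda>w. u w + v w) = (\<lambda>x. lin f u x + lin f v x)"
proof
  fix x
  let ?S = "{m. u m \<noteq> 0} \<union> {m. v m \<noteq> 0}"
  have S: "finite ?S" using assms by (simp add: fin_def)
  have "lin f (\<lambda>w. u w + v w) x = (\<Sum>m\<in>?S. (u m + v m) * f m x)"
    by (rule lin_eq_sum[OF S]) auto
  also have "\<dots> = (\<Sum>m\<in>?S. u m * f m x) + (\<Sum>m\<in>?S. v m * f m x)"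
    by (simp add: algebra_simps sum.distrib)
  also have "\<dots> = lin f u x + lin f v x"
    by (subst (1 2) lin_eq_sum[OF S]) auto
  finally show "lin f (\<lambda>w. u w + v w) x = lin f u x + lin f v x" .
qed

lemma lin_smul: "lin f (\<lambda>w. c * u w) = (\<lambda>x. c * lin f u x)"
  by (cases "c = 0") (simp_all add: lin_def sum_distrib_left mult.assoc)

lemma lin_diff:
  assumes "fin u" "fin v"
  shows "lin f (\<lambda>w. u w - v w) = (\<lambda>x. lin f u x - lin f v x)"
proof
  fix x
  let ?S = "{m. u m \<noteq> 0} \<union> {m. v m \<noteq> 0}"
  have fs: "finite ?S" using assms by (simp add: fin_def)
  have "lin f (\<lambda>w. u w - v w) x = (\<Sum>m\<in>?S. (u m - v m) * f m x)"
    by (rule lin_eq_sum[OF fs]) auto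
  also have "\<dots> = (\<Sum>m\<in>?S. u m * f m x) - (\<Sum>m\<in>?S. v m * f m x)"
    by (simp add: algebra_simps sum_subtractf)
  also have "\<dots> = lin f u x - lin f v x"
    by (subst (1 2) lin_eq_sum[OF fs]) auto
  finally show "lin f (\<lambda>w. u w - v w) x = lin f u x - lin f v x" .
qed

lemmas lin_linear = lin_add lin_diff lin_smul

lemma lin_zero [simp]: "lin f (\<lambda>w. 0) = (\<lambda>w. 0)"
  by (simp add: lin_def)

lemma lin_fadd: "lin (\<lambda>m w. F m w + G m w) v = (\<lambda>w. lin F v w + lin G v w)"
  by (simp add: lin_def algebra_simps sum.distrib)

lemma lin_fdiff: "lin (\<lambda>m w. F m w - G m w) v = (\<lambda>w. lin F v w - lin G v w)"
  by (simp add: lin_def algebra_simps sum_subtractf)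

lemma lin_fsmul: "lin (\<lambda>m w. c * F m w) v = (\<lambda>w. c * lin F v w)"
  by (simp add: lin_def algebra_simps sum_distrib_left)

lemmas lin_family_linear = lin_fadd lin_fdiff lin_fsmul

lemma lin_cong: "(\<And>m. v m \<noteq> 0 \<Longrightarrow> f m = g m) \<Longrightarrow> lin f v = lin g v"
  unfolding lin_def by (auto intro!: sum.cong)

lemma lin_lin:
  assumes "fin v" "\<And>m. fin (g m)"
  shows "lin f (lin g v) = lin (\<lambda>m. lin f (g m)) v"
proof
  fix x
  let ?S = "\<Union>m\<in>{m. v m \<noteq> 0}. {y. g m y \<noteq> 0}"
  have fS: "finite ?S" using assms by (auto simp: fin_def)
  have sub: "{y. lin g v y \<noteq> 0} \<subseteq> ?S"
  proof
    fix y assume "y \<in> {y. lin g v y \<noteq> 0}"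
    then have "(\<Sum>m\<in>{m. v m \<noteq> 0}. v m * g m y) \<noteq> 0" by (simp add: lin_def)
    then obtain m where "m \<in> {m. v m \<noteq> 0}" "v m * g m y \<noteq> 0" by (meson sum.neutral)
    then show "y \<in> ?S" by auto
  qed
  have "lin f (lin g v) x = (\<Sum>y\<in>?S. lin g v y * f y x)" by (rule lin_eq_sum[OF fS sub])
  also have "\<dots> = (\<Sum>y\<in>?S. \<Sum>m\<in>{m. v m \<noteq> 0}. v m * g m y * f y x)"
    by (simp add: lin_def sum_distrib_right)
  also have "\<dots> = (\<Sum>m\<in>{m. v m \<noteq> 0}. v m * (\<Sum>y\<in>?S. g m y * f y x))"
    by (subst sum.swap) (simp add: sum_distrib_left mult.assoc)
  also have "\<dots> = (\<Sum>m\<in>{m. v m \<noteq> 0}. v m * lin f (g m) x)"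
  proof (rule sum.cong[OF refl])
    fix m assume "m \<in> {m. v m \<noteq> 0}"
    then have "{y. g m y \<noteq> 0} \<subseteq> ?S" by auto
    then show "v m * (\<Sum>y\<in>?S. g m y * f y x) = v m * lin f (g m) x"
      using lin_eq_sum[OF fS, of "g m" f x] by simp
  qed
  finally show "lin f (lin g v) x = lin (\<lambda>m. lin f (g m)) v x" by (simp add: lin_def)
qed

definition shift :: "('a \<Rightarrow> 'a) \<Rightarrow> ('a \<Rightarrow> 'k::field) \<Rightarrow> 'a \<Rightarrow> 'k" where
  "shift \<sigma> = lin (\<lambda>m. unit_vec (\<sigma> m))"

lemma shift_unit_vec [simp]: "shift \<sigma> (unit_vec m) = unit_vec (\<sigma> m)"
  by (simp add: shift_def)

lemma fin_shift [simp]: "fin v \<Longrightarrow> fin (shift \<sigma> v)"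
  by (simp add: shift_def)

lemma lin_shift: "fin u \<Longrightarrow> (\<And>m. fin (F m)) \<Longrightarrow> lin F (shift \<sigma> u) = lin (\<lambda>m. F (\<sigma> m)) u"
  by (simp add: shift_def lin_lin)

lemma shift_lin: "fin u \<Longrightarrow> (\<And>m. fin (F m)) \<Longrightarrow> shift \<sigma> (lin F u) = lin (\<lambda>m. shift \<sigma> (F m)) u"
  by (simp add: shift_def lin_lin)

lemma shift_commute:
  "fin v \<Longrightarrow> (\<And>m. \<sigma> (\<tau> m) = \<tau> (\<sigma> m)) \<Longrightarrow> shift \<sigma> (shift \<tau> v) = shift \<tau> (shift \<sigma> v)"
  by (simp add: shift_def lin_lin)

lemma shift_add: "fin u \<Longrightarrow> fin v \<Longrightarrow> shift \<sigma> (\<lambda>w. u w + v w) = (\<lambda>x. shift \<sigma> u x + shift \<sigma> v x)"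
  and shift_diff: "fin u \<Longrightarrow> fin v \<Longrightarrow> shift \<sigma> (\<lambda>w. u w - v w) = (\<lambda>x. shift \<sigma> u x - shift \<sigma> v x)"
  and shift_smul: "shift \<sigma> (\<lambda>w. c * u w) = (\<lambda>x. c * shift \<sigma> u x)"
  by (simp_all add: shift_def lin_linear)

lemmas shift_linear = shift_add shift_diff shift_smul

definition splits :: "gen list \<Rightarrow> (gen list \<times> gen list) set" where
  "splits w = {(u, v). u @ v = w}"

lemma splits_eq_image: "splits w = (\<lambda>i. (take i w, drop i w)) ` {..length w}"
proof (rule set_eqI, rule iffI)
  fix p assume "p \<in> splits w"
  then obtain a b where p: "p = (a, b)" "w = a @ b" unfolding splits_def by auto
  then show "p \<in> (\<lambda>i. (take i w, drop i w)) ` {..length w}"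
    by (intro image_eqI[of _ _ "length a"]) auto
qed (auto simp: splits_def)

lemma finite_splits [simp]: "finite (splits w)"
  by (simp add: splits_eq_image)

lemma fa_mul_splits: "fa_mul f g w = (\<Sum>(u, v)\<in>splits w. f u * g v)"
proof -
  have "bij_betw (\<lambda>i. (take i w, drop i w)) {..length w} (splits w)"
    unfolding bij_betw_def splits_eq_image
  proof
    show "inj_on (\<lambda>i. (take i w, drop i w)) {..length w}"
      by (rule inj_onI) (metis atMost_iff length_take min.absorb2 prod.inject)
  qed simp
  then have "(\<Sum>(u, v)\<in>splits w. f u * g v) = (\<Sum>i\<le>length w. (\<lambda>(u, v). f u * g v) (take i w, drop i w))"
    by (rule sum.reindex_bij_betw[symmetric])
  then show ?thesis by (simp add: fa_mul_def)
qed

definition splits3 :: "gen list \<Rightarrow> (gen list \<times> gen list \<times> gen list) set" where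
  "splits3 w = {(u, v, z). u @ v @ z = w}"

lemma finite_splits3 [simp]: "finite (splits3 w)"
proof -
  have "splits3 w \<subseteq> (\<lambda>((u, y), (v, z)). (u, v, z)) ` (Sigma (splits w) (\<lambda>(u, y). splits y))"
    unfolding splits3_def splits_def by (auto simp: image_def)
  moreover have "finite (Sigma (splits w) (\<lambda>(u, y). splits y))" by (auto intro!: finite_SigmaI)
  ultimately show ?thesis by (rule finite_subset[OF _ finite_imageI])
qed

lemma fa_mul_assoc: "fa_mul (fa_mul f g) h = fa_mul f (fa_mul g h)"
proof
  fix w
  have "fa_mul (fa_mul f g) h w = (\<Sum>xz\<in>splits w. \<Sum>uv\<in>splits (fst xz). f (fst uv) * g (snd uv) * h (snd xz))"
    by (simp add: fa_mul_splits sum_distrib_right case_prod_unfold)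
  also have "\<dots> = (\<Sum>(xz, uv)\<in>Sigma (splits w) (\<lambda>xz. splits (fst xz)). f (fst uv) * g (snd uv) * h (snd xz))"
    by (rule sum.Sigma) auto
  also have "\<dots> = (\<Sum>(u, v, z)\<in>splits3 w. f u * g v * h z)"
    by (rule sum.reindex_bij_witness[where i = "\<lambda>(u, v, z). ((u @ v, z), (u, v))"
          and j = "\<lambda>((x, z), (u, v)). (u, v, z)"]) (auto simp: splits_def splits3_def)
  finally have L: "fa_mul (fa_mul f g) h w = (\<Sum>(u, v, z)\<in>splits3 w. f u * g v * h z)" .
  have "fa_mul f (fa_mul g h) w = (\<Sum>uy\<in>splits w. \<Sum>vz\<in>splits (snd uy). f (fst uy) * g (fst vz) * h (snd vz))"
    by (simp add: fa_mul_splits sum_distrib_left case_prod_unfold mult.assoc)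
  also have "\<dots> = (\<Sum>(uy, vz)\<in>Sigma (splits w) (\<lambda>uy. splits (snd uy)). f (fst uy) * g (fst vz) * h (snd vz))"
    by (rule sum.Sigma) auto
  also have "\<dots> = (\<Sum>(u, v, z)\<in>splits3 w. f u * g v * h z)"
    by (rule sum.reindex_bij_witness[where i = "\<lambda>(u, v, z). ((u, v @ z), (v, z))"
          and j = "\<lambda>((u, y), (v, z)). (u, v, z)"]) (auto simp: splits_def splits3_def)
  finally show "fa_mul (fa_mul f g) h w = fa_mul f (fa_mul g h) w" using L by simp
qed

lemma fa_mul_add_left: "fa_mul (fa_add f g) h = fa_add (fa_mul f h) (fa_mul g h)"
  by (auto simp: fa_mul_def fa_add_def algebra_simps sum.distrib)

lemma fa_mul_add_right: "fa_mul f (fa_add g h) = fa_add (fa_mul f g) (fa_mul f h)"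
  by (auto simp: fa_mul_def fa_add_def algebra_simps sum.distrib)

lemma fa_mul_diff_left: "fa_mul (fa_diff f g) h = fa_diff (fa_mul f h) (fa_mul g h)"
  by (auto simp: fa_mul_def fa_diff_def algebra_simps sum_subtractf)

lemma fa_mul_diff_right: "fa_mul f (fa_diff g h) = fa_diff (fa_mul f g) (fa_mul f h)"
  by (auto simp: fa_mul_def fa_diff_def algebra_simps sum_subtractf)

lemma fa_mul_smul_left: "fa_mul (fa_smul c f) g = fa_smul c (fa_mul f g)"
  by (auto simp: fa_mul_def fa_smul_def algebra_simps sum_distrib_left)

lemma fa_mul_smul_right: "fa_mul f (fa_smul c g) = fa_smul c (fa_mul f g)"
  by (auto simp: fa_mul_def fa_smul_def algebra_simps sum_distrib_left)

lemma fa_mul_zero_left: "fa_mul (\<lambda>w. 0) f = (\<lambda>w. 0)"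
  by (auto simp: fa_mul_def)

lemma fa_mul_zero_right: "fa_mul f (\<lambda>w. 0) = (\<lambda>w. 0)"
  by (auto simp: fa_mul_def)

lemma fa_mul_sum_left: "fa_mul (\<lambda>w. \<Sum>s\<in>T. c s * g s w) f = (\<lambda>w. \<Sum>s\<in>T. c s * fa_mul (g s) f w)"
  unfolding fa_mul_def by (simp add: sum_distrib_left sum_distrib_right algebra_simps sum.swap[of _ T])

lemma fa_mul_sum_right: "fa_mul f (\<lambda>w. \<Sum>s\<in>T. c s * g s w) = (\<lambda>w. \<Sum>s\<in>T. c s * fa_mul f (g s) w)"
  unfolding fa_mul_def by (simp add: sum_distrib_left algebra_simps sum.swap[of _ T])

lemma fa_mul_lin_left: "fa_mul (lin H c) g = lin (\<lambda>a. fa_mul (H a) g) c"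
  unfolding lin_def by (rule fa_mul_sum_left)

lemma fa_mul_lin_right: "fa_mul g (lin H c) = lin (\<lambda>a. fa_mul g (H a)) c"
  unfolding lin_def by (rule fa_mul_sum_right)

lemma fa_mul_comb3:
  "fa_mul (\<lambda>w. a * f w - b * g w + c * h w) k = (\<lambda>w. a * fa_mul f k w - b * fa_mul g k w + c * fa_mul h k w)"
  "fa_mul (\<lambda>w. a * f w + b * g w - c * h w) k = (\<lambda>w. a * fa_mul f k w + b * fa_mul g k w - c * fa_mul h k w)"
  by (simp_all add: fa_mul_def fun_eq_iff algebra_simps sum.distrib sum_subtractf sum_distrib_left)

lemma fa_one_eq_unit_vec: "fa_one = unit_vec []"
  by (simp add: fa_one_def unit_vec_def)

lemma fa_gen_eq_unit_vec: "fa_gen x = unit_vec [x]"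
  by (simp add: fa_gen_def unit_vec_def)

lemma fa_mul_unit_vec: "fa_mul (unit_vec u) (unit_vec u') = unit_vec (u @ u')"
proof
  fix w
  have "fa_mul (unit_vec u) (unit_vec u') w = (\<Sum>p\<in>splits w. if p = (u, u') then 1 else 0)"
    unfolding fa_mul_splits by (rule sum.cong) (auto simp: unit_vec_def split: if_splits)
  also have "\<dots> = unit_vec (u @ u') w" by (subst sum.delta) (simp, simp add: splits_def unit_vec_def)
  finally show "fa_mul (unit_vec u) (unit_vec u') w = unit_vec (u @ u') w" .
qed

lemma fin_fa_mul [simp]:
  assumes "fin f" "fin g"
  shows "fin (fa_mul f g)"
proof -
  have "{w. fa_mul f g w \<noteq> 0} \<subseteq> (\<lambda>(u, v). u @ v) ` ({w. f w \<noteq> 0} \<times> {w. g w \<noteq> 0})"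
  proof
    fix w assume "w \<in> {w. fa_mul f g w \<noteq> 0}"
    then obtain p where "p \<in> splits w" "(\<lambda>(u, v). f u * g v) p \<noteq> 0"
      unfolding fa_mul_splits by (auto elim: sum.not_neutral_contains_not_neutral)
    then show "w \<in> (\<lambda>(u, v). u @ v) ` ({w. f w \<noteq> 0} \<times> {w. g w \<noteq> 0})"
      by (auto simp: splits_def image_def)
  qed
  then show ?thesis using assms unfolding fin_def by (auto elim: finite_subset)
qed

lemma fa_mul_eq_lin:
  assumes "fin f" "fin g"
  shows "fa_mul f g = lin (\<lambda>u. lin (\<lambda>u'. unit_vec (u @ u')) g) f"
proof -
  have "fa_mul f g = fa_mul (lin unit_vec f) (lin unit_vec g)" using assms by (simp add: lin_unit_vec_id)
  also have "\<dots> = lin (\<lambda>u. lin (\<lambda>u'. fa_mul (unit_vec u) (unit_vec u')) g) f"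
    by (subst fa_mul_lin_left, subst fa_mul_lin_right) (rule refl)
  finally show ?thesis by (simp add: fa_mul_unit_vec)
qed

lemma fa_mul_one_left [simp]: "fa_mul fa_one f = f"
proof
  fix w
  have "fa_mul fa_one f w = (\<Sum>(u, v)\<in>splits w. if u = [] then f v else 0)"
    by (auto simp: fa_mul_splits fa_one_def case_prod_unfold intro!: sum.cong)
  also have "\<dots> = (\<Sum>p\<in>splits w. if p = ([], w) then f w else 0)"
    by (rule sum.cong) (auto simp: splits_def split: if_splits)
  also have "\<dots> = f w" by (subst sum.delta) (auto simp: splits_def[symmetric], auto simp: splits_def)
  finally show "fa_mul fa_one f w = f w" .
qed

lemma fa_mul_one_right [simp]: "fa_mul f fa_one = f"
proof
  fix w
  have "fa_mul f fa_one w = (\<Sum>(u, v)\<in>splits w. if v = [] then f u else 0)"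
    by (auto simp: fa_mul_splits fa_one_def case_prod_unfold intro!: sum.cong)
  also have "\<dots> = (\<Sum>p\<in>splits w. if p = (w, []) then f w else 0)"
    by (rule sum.cong) (auto simp: splits_def split: if_splits)
  also have "\<dots> = f w" by (subst sum.delta) (auto simp: splits_def[symmetric], auto simp: splits_def)
  finally show "fa_mul f fa_one w = f w" .
qed

lemma fin_fa_add [simp]: "fin f \<Longrightarrow> fin g \<Longrightarrow> fin (fa_add f g)"
  and fin_fa_diff [simp]: "fin f \<Longrightarrow> fin g \<Longrightarrow> fin (fa_diff f g)"
  and fin_fa_smul [simp]: "fin f \<Longrightarrow> fin (fa_smul c f)"
  by (simp_all add: fa_add_def fa_diff_def fa_smul_def)

lemma fin_fa_one [simp]: "fin fa_one"
  and fin_fa_gen [simp]: "fin (fa_gen x)"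
  by (simp_all add: fa_one_eq_unit_vec fa_gen_eq_unit_vec)

lemma fin_fa_pow [simp]: "fin f \<Longrightarrow> fin (fa_pow f n)"
  by (induction n) simp_all

lemma fin_aw_central [simp]: "fin X \<Longrightarrow> fin Y \<Longrightarrow> fin Z \<Longrightarrow> fin (aw_central q X Y Z)"
  by (simp add: aw_central_def)

lemma fin_aw_alpha [simp]: "fin (aw_alpha q)"
  and fin_aw_beta [simp]: "fin (aw_beta q)"
  and fin_aw_gamma [simp]: "fin (aw_gamma q)"
  by (simp_all add: aw_alpha_def aw_beta_def aw_gamma_def)

lemma fa_poly_iff_fin: "f \<in> fa_poly \<longleftrightarrow> fin f"
  by (simp add: fa_poly_def fin_def)

definition fa_subspace :: "('k::field) fa set \<Rightarrow> bool" where
  "fa_subspace V \<longleftrightarrow> (\<lambda>w. 0) \<in> V \<and> (\<forall>f\<in>V. \<forall>g\<in>V. fa_add f g \<in> V) \<and> (\<forall>c. \<forall>f\<in>V. fa_smul c f \<in> V)"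

lemma fa_subspace_sum:
  assumes "fa_subspace V"
  shows "finite T \<Longrightarrow> (\<And>s. s \<in> T \<Longrightarrow> g s \<in> V) \<Longrightarrow> (\<lambda>w. \<Sum>s\<in>T. c s * g s w) \<in> V"
proof (induction T rule: finite_induct)
  case empty then show ?case using assms by (simp add: fa_subspace_def)
next
  case (insert x F)
  have "(\<lambda>w. \<Sum>s\<in>insert x F. c s * g s w) = fa_add (fa_smul (c x) (g x)) (\<lambda>w. \<Sum>s\<in>F. c s * g s w)"
    using insert by (simp add: fa_add_def fa_smul_def)
  then show ?case using insert assms by (simp add: fa_subspace_def)
qed

lemma fa_subspace_diff: "fa_subspace V \<Longrightarrow> f \<in> V \<Longrightarrow> g \<in> V \<Longrightarrow> fa_diff f g \<in> V"
  using fa_subspace_sum[of V "{True, False}" "\<lambda>b. if b then f else g" "\<lambda>b. if b then 1 else - 1"]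
  by (simp add: fa_diff_def)

lemma fa_span_least:
  assumes "fa_subspace V" "S \<subseteq> V"
  shows "fa_span S \<subseteq> V"
proof
  fix f assume "f \<in> fa_span S"
  then obtain T c where "finite T" "T \<subseteq> S" "f = (\<lambda>w. \<Sum>s\<in>T. c s * s w)" unfolding fa_span_def by auto
  then show "f \<in> V" using fa_subspace_sum[OF assms(1), of T "\<lambda>s. s" c] assms(2) by auto
qed

lemma fa_subspace_span: "fa_subspace (fa_span S)"
  unfolding fa_subspace_def
proof (intro conjI ballI allI)
  show "(\<lambda>w. 0) \<in> fa_span S" unfolding fa_span_def by (intro CollectI exI[of _ "{}"]) auto
next
  fix f g assume "f \<in> fa_span S" "g \<in> fa_span S"
  then obtain T1 c1 T2 c2 where T: "finite T1" "T1 \<subseteq> S" "f = (\<lambda>w. \<Sum>s\<in>T1. c1 s * s w)"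
    "finite T2" "T2 \<subseteq> S" "g = (\<lambda>w. \<Sum>s\<in>T2. c2 s * s w)" unfolding fa_span_def by blast
  define c where "c s = (if s \<in> T1 then c1 s else 0) + (if s \<in> T2 then c2 s else 0)" for s
  have "fa_add f g = (\<lambda>w. \<Sum>s\<in>T1 \<union> T2. c s * s w)"
  proof
    fix w
    have "(\<Sum>s\<in>T1 \<union> T2. c s * s w)
        = (\<Sum>s\<in>T1 \<union> T2. (if s \<in> T1 then c1 s * s w else 0) + (if s \<in> T2 then c2 s * s w else 0))"
      unfolding c_def by (rule sum.cong) (auto simp: algebra_simps)
    also have "\<dots> = (\<Sum>s\<in>T1 \<union> T2. if s \<in> T1 then c1 s * s w else 0) + (\<Sum>s\<in>T1 \<union> T2. if s \<in> T2 then c2 s * s w else 0)"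
      by (rule sum.distrib)
    also have "\<dots> = (\<Sum>s\<in>T1. c1 s * s w) + (\<Sum>s\<in>T2. c2 s * s w)"
      using T by (simp add: sum.inter_restrict[symmetric] Int_absorb1 Int_absorb2)
    finally show "fa_add f g w = (\<Sum>s\<in>T1 \<union> T2. c s * s w)" using T by (simp add: fa_add_def)
  qed
  then show "fa_add f g \<in> fa_span S" unfolding fa_span_def using T
    by (intro CollectI exI[of _ "T1 \<union> T2"] exI[of _ c]) auto
next
  fix a f assume "f \<in> fa_span S"
  then obtain T c where T: "finite T" "T \<subseteq> S" "f = (\<lambda>w. \<Sum>s\<in>T. c s * s w)" unfolding fa_span_def by blast
  then have "fa_smul a f = (\<lambda>w. \<Sum>s\<in>T. (a * c s) * s w)"
    by (simp add: fa_smul_def sum_distrib_left algebra_simps)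
  then show "fa_smul a f \<in> fa_span S" unfolding fa_span_def using T
    by (intro CollectI exI[of _ T] exI[of _ "\<lambda>s. a * c s"]) auto
qed

lemma fa_span_base: "s \<in> S \<Longrightarrow> s \<in> fa_span S"
  unfolding fa_span_def by (intro CollectI exI[of _ "{s}"] exI[of _ "\<lambda>_. 1"]) auto

abbreviation aw_ideal_gens :: "'k::field \<Rightarrow> 'k fa set" where
  "aw_ideal_gens q \<equiv> {fa_mul (fa_mul a r) b | a r b. a \<in> fa_poly \<and> b \<in> fa_poly \<and> r \<in> aw_rels q}"

lemma fa_subspace_aw_ideal: "fa_subspace (aw_ideal q)"
  unfolding aw_ideal_def by (rule fa_subspace_span)

lemma aw_ideal_zero: "(\<lambda>w. 0) \<in> aw_ideal q"
  and aw_ideal_add: "f \<in> aw_ideal q \<Longrightarrow> g \<in> aw_ideal q \<Longrightarrow> fa_add f g \<in> aw_ideal q"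
  and aw_ideal_smul: "f \<in> aw_ideal q \<Longrightarrow> fa_smul c f \<in> aw_ideal q"
  using fa_subspace_aw_ideal unfolding fa_subspace_def by blast+

lemma aw_ideal_diff: "f \<in> aw_ideal q \<Longrightarrow> g \<in> aw_ideal q \<Longrightarrow> fa_diff f g \<in> aw_ideal q"
  by (rule fa_subspace_diff[OF fa_subspace_aw_ideal])

lemma aw_ideal_gens_mem: "a \<in> fa_poly \<Longrightarrow> b \<in> fa_poly \<Longrightarrow> r \<in> aw_rels q \<Longrightarrow> fa_mul (fa_mul a r) b \<in> aw_ideal q"
  unfolding aw_ideal_def by (rule fa_span_base) blast

lemma aw_ideal_mul_left:
  assumes "fin p" "f \<in> aw_ideal q"
  shows "fa_mul p f \<in> aw_ideal q"
proof -
  have "fa_subspace {f. fa_mul p f \<in> aw_ideal q}"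
    unfolding fa_subspace_def
    by (auto simp: fa_mul_zero_right fa_mul_add_right fa_mul_smul_right aw_ideal_zero aw_ideal_add aw_ideal_smul)
  moreover have "aw_ideal_gens q \<subseteq> {f. fa_mul p f \<in> aw_ideal q}"
  proof
    fix x assume "x \<in> aw_ideal_gens q"
    then obtain a r b where x: "x = fa_mul (fa_mul a r) b" "fin a" "fin b" "r \<in> aw_rels q"
      by (auto simp: fa_poly_iff_fin)
    then have "fa_mul p x = fa_mul (fa_mul (fa_mul p a) r) b" by (simp add: fa_mul_assoc)
    then show "x \<in> {f. fa_mul p f \<in> aw_ideal q}"
      using x assms(1) by (auto simp: fa_poly_iff_fin intro!: aw_ideal_gens_mem)
  qed
  ultimately show ?thesis using fa_span_least assms(2) unfolding aw_ideal_def by blast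
qed

lemma aw_ideal_mul_right:
  assumes "fin p" "f \<in> aw_ideal q"
  shows "fa_mul f p \<in> aw_ideal q"
proof -
  have "fa_subspace {f. fa_mul f p \<in> aw_ideal q}"
    unfolding fa_subspace_def
    by (auto simp: fa_mul_zero_left fa_mul_add_left fa_mul_smul_left aw_ideal_zero aw_ideal_add aw_ideal_smul)
  moreover have "aw_ideal_gens q \<subseteq> {f. fa_mul f p \<in> aw_ideal q}"
  proof
    fix x assume "x \<in> aw_ideal_gens q"
    then obtain a r b where x: "x = fa_mul (fa_mul a r) b" "fin a" "fin b" "r \<in> aw_rels q"
      by (auto simp: fa_poly_iff_fin)
    then have "fa_mul x p = fa_mul (fa_mul a r) (fa_mul b p)" by (simp add: fa_mul_assoc)
    then show "x \<in> {f. fa_mul f p \<in> aw_ideal q}"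
      using x assms(1) by (auto simp: fa_poly_iff_fin intro!: aw_ideal_gens_mem)
  qed
  ultimately show ?thesis using fa_span_least assms(2) unfolding aw_ideal_def by blast
qed

lemma aw_rels_in_ideal: "r \<in> aw_rels q \<Longrightarrow> r \<in> aw_ideal q"
  using aw_ideal_gens_mem[of fa_one fa_one r q] unfolding aw_rels_def
  by (auto simp: fa_poly_iff_fin)

definition aw_cong :: "'k::field \<Rightarrow> 'k fa \<Rightarrow> 'k fa \<Rightarrow> bool" where
  "aw_cong q f g \<longleftrightarrow> fa_diff f g \<in> aw_ideal q"

lemma aw_cong_eqI: "f = g \<Longrightarrow> aw_cong q f g"
  using aw_ideal_zero by (simp add: aw_cong_def fa_diff_def)

lemma aw_cong_refl: "aw_cong q f f"
  by (rule aw_cong_eqI) (rule refl)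

lemma aw_cong_sym: "aw_cong q f g \<Longrightarrow> aw_cong q g f"
  using aw_ideal_smul[of "fa_diff f g" q "- 1"] by (simp add: aw_cong_def fa_smul_def fa_diff_def)

lemma aw_cong_trans: "aw_cong q f g \<Longrightarrow> aw_cong q g h \<Longrightarrow> aw_cong q f h"
  using aw_ideal_add[of "fa_diff f g" q "fa_diff g h"] by (simp add: aw_cong_def fa_add_def fa_diff_def)

lemma aw_cong_add: "aw_cong q f1 g1 \<Longrightarrow> aw_cong q f2 g2 \<Longrightarrow> aw_cong q (fa_add f1 f2) (fa_add g1 g2)"
  and aw_cong_diff: "aw_cong q f1 g1 \<Longrightarrow> aw_cong q f2 g2 \<Longrightarrow> aw_cong q (fa_diff f1 f2) (fa_diff g1 g2)"
  and aw_cong_smul: "aw_cong q f1 g1 \<Longrightarrow> aw_cong q (fa_smul c f1) (fa_smul c g1)"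
proof -
  have "fa_diff (fa_add f1 f2) (fa_add g1 g2) = fa_add (fa_diff f1 g1) (fa_diff f2 g2)"
    and "fa_diff (fa_diff f1 f2) (fa_diff g1 g2) = fa_diff (fa_diff f1 g1) (fa_diff f2 g2)"
    and "fa_diff (fa_smul c f1) (fa_smul c g1) = fa_smul c (fa_diff f1 g1)"
    by (simp_all add: fun_eq_iff fa_add_def fa_diff_def fa_smul_def algebra_simps)
  then show "aw_cong q f1 g1 \<Longrightarrow> aw_cong q f2 g2 \<Longrightarrow> aw_cong q (fa_add f1 f2) (fa_add g1 g2)"
    and "aw_cong q f1 g1 \<Longrightarrow> aw_cong q f2 g2 \<Longrightarrow> aw_cong q (fa_diff f1 f2) (fa_diff g1 g2)"
    and "aw_cong q f1 g1 \<Longrightarrow> aw_cong q (fa_smul c f1) (fa_smul c g1)"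
    by (simp_all add: aw_cong_def aw_ideal_add aw_ideal_diff aw_ideal_smul)
qed

lemma aw_cong_comb3:
  assumes "aw_cong q f1 g1" "aw_cong q f2 g2" "aw_cong q f3 g3"
  shows "aw_cong q (\<lambda>w. a * f1 w - b * f2 w + c * f3 w) (\<lambda>w. a * g1 w - b * g2 w + c * g3 w)"
    and "aw_cong q (\<lambda>w. a * f1 w + b * f2 w - c * f3 w) (\<lambda>w. a * g1 w + b * g2 w - c * g3 w)"
proof -
  have "(\<lambda>w. a * f w - b * g w + c * h w) = fa_add (fa_diff (fa_smul a f) (fa_smul b g)) (fa_smul c h)"
    and "(\<lambda>w. a * f w + b * g w - c * h w) = fa_diff (fa_add (fa_smul a f) (fa_smul b g)) (fa_smul c h)"
    for f g h :: "'a fa"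
    by (simp_all add: fa_add_def fa_diff_def fa_smul_def)
  then show "aw_cong q (\<lambda>w. a * f1 w - b * f2 w + c * f3 w) (\<lambda>w. a * g1 w - b * g2 w + c * g3 w)"
    and "aw_cong q (\<lambda>w. a * f1 w + b * f2 w - c * f3 w) (\<lambda>w. a * g1 w + b * g2 w - c * g3 w)"
    using assms by (simp_all add: aw_cong_add aw_cong_diff aw_cong_smul)
qed

lemma aw_cong_mul_left: "fin p \<Longrightarrow> aw_cong q f g \<Longrightarrow> aw_cong q (fa_mul p f) (fa_mul p g)"
  by (simp add: aw_cong_def fa_mul_diff_right[symmetric] aw_ideal_mul_left)

lemma aw_cong_mul_right: "fin p \<Longrightarrow> aw_cong q f g \<Longrightarrow> aw_cong q (fa_mul f p) (fa_mul g p)"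
  by (simp add: aw_cong_def fa_mul_diff_left[symmetric] aw_ideal_mul_right)

lemma aw_cong_lin:
  assumes "fin v" "\<And>m. v m \<noteq> 0 \<Longrightarrow> aw_cong q (F m) (G m)"
  shows "aw_cong q (lin F v) (lin G v)"
proof -
  have "fa_diff (lin F v) (lin G v) = (\<lambda>w. \<Sum>m\<in>{m. v m \<noteq> 0}. v m * fa_diff (F m) (G m) w)"
    by (auto simp: lin_def fa_diff_def algebra_simps sum_subtractf)
  moreover have "(\<lambda>w. \<Sum>m\<in>{m. v m \<noteq> 0}. v m * fa_diff (F m) (G m) w) \<in> aw_ideal q"
    using assms by (intro fa_subspace_sum[OF fa_subspace_aw_ideal]) (auto simp: fin_def aw_cong_def)
  ultimately show ?thesis by (simp add: aw_cong_def)
qed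

section \<open>Exponent tuples and the coefficients of B and C\<close>

type_synonym idx = "nat \<times> nat \<times> nat \<times> nat \<times> nat \<times> nat"

fun deg :: "idx \<Rightarrow> nat" where
  "deg (i, j, k, r, s, t) = i + j + k + r + s + t"

lemma mem_idx_le_iff: "m \<in> idx_le n \<longleftrightarrow> deg m \<le> n"
  by (cases m) (auto simp: idx_le_def)

lemma finite_idx_le: "finite (idx_le n)"
proof -
  have "idx_le n \<subseteq> {..n} \<times> {..n} \<times> {..n} \<times> {..n} \<times> {..n} \<times> {..n}"
    by (auto simp: idx_le_def)
  then show ?thesis by (rule finite_subset) auto
qed

fun incA :: "idx \<Rightarrow> idx" where
  "incA (i, j, k, r, s, t) = (Suc i, j, k, r, s, t)"

fun inc_central :: "nat \<Rightarrow> nat \<Rightarrow> nat \<Rightarrow> idx \<Rightarrow> idx" where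
  "inc_central a b c (i, j, k, r, s, t) = (i, j, k, r + a, s + b, t + c)"

abbreviation incR :: "idx \<Rightarrow> idx" where "incR \<equiv> inc_central 1 0 0"
abbreviation incS :: "idx \<Rightarrow> idx" where "incS \<equiv> inc_central 0 1 0"
abbreviation incT :: "idx \<Rightarrow> idx" where "incT \<equiv> inc_central 0 0 1"

lemma deg_incA [simp]: "deg (incA m) = Suc (deg m)"
  by (cases m) simp

lemma deg_inc_central [simp]: "deg (inc_central a b c m) = deg m + a + b + c"
  by (cases m) simp

lemma shift_incA_inc_central:
  "fin v \<Longrightarrow> shift (inc_central a b c) (shift incA v) = shift incA (shift (inc_central a b c) v)"
  by (rule shift_commute) (auto elim: incA.elims)

lemma shift_apply_eq_zero: "(\<And>m. v m \<noteq> 0 \<Longrightarrow> \<sigma> m \<noteq> w) \<Longrightarrow> shift \<sigma> v w = 0"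
  unfolding shift_def lin_def by (intro sum.neutral) (auto simp: unit_vec_def)

text \<open>
  With x^m = A^i B^j C^k alpha^r beta^s gamma^t, actB q m and actC q m are the coordinates of
  B x^m and C x^m modulo the ideal in the monomials x^m': B and C are moved to the right past A
  using BA and CA, and C past B using CB. The last equation sums over idx_le instead of using
  lin so that the termination proof sees the range of m'.
\<close>
function actBC :: "'k::field \<Rightarrow> bool \<Rightarrow> idx \<Rightarrow> idx \<Rightarrow> 'k" where
  "actBC q False (0, j, k, r, s, t) = unit_vec (0, Suc j, k, r, s, t)"
| "actBC q False (Suc i, j, k, r, s, t) = (\<lambda>w. q^2 * shift incA (actBC q False (i, j, k, r, s, t)) w
      - (q^2 - 1) * unit_vec (i, j, k, r, s, Suc t) w + (q^3 - inverse q) * actBC q True (i, j, k, r, s, t) w)"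
| "actBC q True (Suc i, j, k, r, s, t) = (\<lambda>w. inverse q ^ 2 * shift incA (actBC q True (i, j, k, r, s, t)) w
      + (1 - inverse q ^ 2) * unit_vec (i, j, k, r, Suc s, t) w - (q - inverse q ^ 3) * actBC q False (i, j, k, r, s, t) w)"
| "actBC q True (0, 0, k, r, s, t) = unit_vec (0, 0, Suc k, r, s, t)"
| "actBC q True (0, Suc j, k, r, s, t) = (\<lambda>w.
      q^2 * (\<Sum>m'\<in>idx_le (Suc (j + k + r + s + t)). actBC q True (0, j, k, r, s, t) m' * actBC q False m' w)
      - (q^2 - 1) * unit_vec (0, j, k, Suc r, s, t) w + (q^3 - inverse q) * unit_vec (Suc 0, j, k, r, s, t) w)"
  by pat_completeness auto
termination
  by (relation "measure (\<lambda>(q, b, m). 2 * deg m + (if b then 1 else 0))") (auto simp: mem_idx_le_iff)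

abbreviation actB :: "'k::field \<Rightarrow> idx \<Rightarrow> idx \<Rightarrow> 'k" where "actB q \<equiv> actBC q False"
abbreviation actC :: "'k::field \<Rightarrow> idx \<Rightarrow> idx \<Rightarrow> 'k" where "actC q \<equiv> actBC q True"

lemma actBC_eq_zero: "Suc (deg m) < deg w \<Longrightarrow> actBC q b m w = 0"
proof (induction q b m arbitrary: w rule: actBC.induct)
  case (2 q i j k r s t)
  have "shift incA (actB q (i, j, k, r, s, t)) w = 0"
    by (rule shift_apply_eq_zero) (use 2 in force)
  then show ?case using 2 by (auto simp: unit_vec_def)
next
  case (3 q i j k r s t)
  have "shift incA (actC q (i, j, k, r, s, t)) w = 0"
    by (rule shift_apply_eq_zero) (use 3 in force)
  then show ?case using 3 by (auto simp: unit_vec_def)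
next
  case (5 q j k r s t)
  have "(\<Sum>m'\<in>idx_le (Suc (j + k + r + s + t)). actC q (0, j, k, r, s, t) m' * actB q m' w) = 0"
    using 5 by (intro sum.neutral) (auto simp: mem_idx_le_iff)
  then show ?case using 5 by (auto simp: unit_vec_def)
qed (auto simp: unit_vec_def)

lemma actBC_support: "{w. actBC q b m w \<noteq> 0} \<subseteq> idx_le (Suc (deg m))"
  using actBC_eq_zero[of m _ q b] by (auto simp: mem_idx_le_iff not_less[symmetric])

lemma fin_actBC [simp]: "fin (actBC q b m)"
  unfolding fin_def by (rule finite_subset[OF actBC_support finite_idx_le])

lemma actC_0_Suc: "actC q (0, Suc j, k, r, s, t) = (\<lambda>w. q^2 * lin (actB q) (actC q (0, j, k, r, s, t)) w
      - (q^2 - 1) * unit_vec (0, j, k, Suc r, s, t) w + (q^3 - inverse q) * unit_vec (Suc 0, j, k, r, s, t) w)"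
proof -
  have "(\<Sum>m'\<in>idx_le (Suc (j + k + r + s + t)). actC q (0, j, k, r, s, t) m' * actB q m' w)
      = lin (actB q) (actC q (0, j, k, r, s, t)) w" for w
    using actBC_support[of q True "(0, j, k, r, s, t)"] by (simp add: lin_eq_sum[OF finite_idx_le])
  then show ?thesis by simp
qed

declare actBC.simps(5) [simp del]

lemma actB_incA: "actB q (incA m) = (\<lambda>w. q^2 * shift incA (actB q m) w
      - (q^2 - 1) * unit_vec (incT m) w + (q^3 - inverse q) * actC q m w)"
  by (cases m) simp

lemma actC_incA: "actC q (incA m) = (\<lambda>w. inverse q ^ 2 * shift incA (actC q m) w
      + (1 - inverse q ^ 2) * unit_vec (incS m) w - (q - inverse q ^ 3) * actB q m w)"
  by (cases m) simp

lemma lin_shift_commute: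
  assumes "fin u" "\<And>m. u m \<noteq> 0 \<Longrightarrow> F (\<sigma> m) = shift \<sigma> (F m)" "\<And>m. fin (F m)"
  shows "lin F (shift \<sigma> u) = shift \<sigma> (lin F u)"
proof -
  have "lin F (shift \<sigma> u) = lin (\<lambda>m. F (\<sigma> m)) u" using assms by (simp add: lin_shift)
  also have "\<dots> = lin (\<lambda>m. shift \<sigma> (F m)) u" by (rule lin_cong) (use assms in auto)
  also have "\<dots> = shift \<sigma> (lin F u)" using assms by (simp add: shift_lin)
  finally show ?thesis .
qed

text \<open>This is what makes alpha, beta, gamma act centrally.\<close>
lemma actBC_inc_central: "actBC q b (inc_central a b' c m) = shift (inc_central a b' c) (actBC q b m)"
proof (induction q b m rule: actBC.induct)
  case (5 q j k r s t)
  let ?\<sigma> = "inc_central a b' c" and ?u = "actC q (0, j, k, r, s, t)"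
  have "(0, 0, 0, 0, 0, 0) \<in> idx_le (Suc (j + k + r + s + t))" by (simp add: idx_le_def)
  then have IH: "actC q (?\<sigma> (0, j, k, r, s, t)) = shift ?\<sigma> ?u" by (rule "5.IH"(1))
  have "lin (actB q) (shift ?\<sigma> ?u) = shift ?\<sigma> (lin (actB q) ?u)"
  proof (rule lin_shift_commute)
    fix m assume "?u m \<noteq> 0"
    then have "m \<in> idx_le (Suc (j + k + r + s + t))" using actBC_support[of q True "(0, j, k, r, s, t)"] by auto
    then show "actB q (?\<sigma> m) = shift ?\<sigma> (actB q m)" by (rule "5.IH"(2))
  qed auto
  then show ?case using IH by (simp add: actC_0_Suc shift_linear)
qed (simp_all add: shift_linear shift_incA_inc_central)

lemma lin_actB_shift_incA:
  assumes "fin v"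
  shows "lin (actB q) (shift incA v) = (\<lambda>w. q^2 * shift incA (lin (actB q) v) w
      - (q^2 - 1) * shift incT v w + (q^3 - inverse q) * lin (actC q) v w)"
proof -
  have "lin (actB q) (shift incA v) = lin (\<lambda>m. actB q (incA m)) v" using assms by (simp add: lin_shift)
  also have "\<dots> = (\<lambda>w. q^2 * lin (\<lambda>m. shift incA (actB q m)) v w
      - (q^2 - 1) * lin (\<lambda>m. unit_vec (incT m)) v w + (q^3 - inverse q) * lin (actC q) v w)"
    by (simp only: actB_incA lin_family_linear)
  finally show ?thesis using assms by (simp add: shift_lin flip: shift_def)
qed

lemma lin_actC_shift_incA:
  assumes "fin v"
  shows "lin (actC q) (shift incA v) = (\<lambda>w. inverse q ^ 2 * shift incA (lin (actC q) v) w
      + (1 - inverse q ^ 2) * shift incS v w - (q - inverse q ^ 3) * lin (actB q) v w)"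
proof -
  have "lin (actC q) (shift incA v) = lin (\<lambda>m. actC q (incA m)) v" using assms by (simp add: lin_shift)
  also have "\<dots> = (\<lambda>w. inverse q ^ 2 * lin (\<lambda>m. shift incA (actC q m)) v w
      + (1 - inverse q ^ 2) * lin (\<lambda>m. unit_vec (incS m)) v w - (q - inverse q ^ 3) * lin (actB q) v w)"
    by (simp only: actC_incA lin_family_linear)
  finally show ?thesis using assms by (simp add: shift_lin flip: shift_def)
qed

lemma actC_actB:
  assumes "q \<noteq> 0"
  shows "lin (actC q) (actB q m) = (\<lambda>w. q^2 * lin (actB q) (actC q m) w
      - (q^2 - 1) * unit_vec (incR m) w + (q^3 - inverse q) * unit_vec (incA m) w)"
proof -
  obtain i j k r s t where m: "m = (i, j, k, r, s, t)" by (cases m)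
  show ?thesis unfolding m
  proof (induction i)
    case 0 show ?case by (simp add: actC_0_Suc)
  next
    case (Suc i)
    let ?m = "(i, j, k, r, s, t)"
    have e1: "lin (actC q) (actB q (incA ?m)) = (\<lambda>w. q^2 * lin (actC q) (shift incA (actB q ?m)) w
        - (q^2 - 1) * lin (actC q) (unit_vec (incT ?m)) w + (q^3 - inverse q) * lin (actC q) (actC q ?m) w)"
      by (simp only: actB_incA) (simp add: lin_linear)
    have e2: "lin (actC q) (shift incA (actB q ?m)) = (\<lambda>w. inverse q ^ 2 * shift incA (lin (actC q) (actB q ?m)) w
        + (1 - inverse q ^ 2) * shift incS (actB q ?m) w - (q - inverse q ^ 3) * lin (actB q) (actB q ?m) w)"
      by (simp add: lin_actC_shift_incA)
    have e3: "shift incA (lin (actC q) (actB q ?m)) = (\<lambda>w. q^2 * shift incA (lin (actB q) (actC q ?m)) w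
        - (q^2 - 1) * unit_vec (incA (incR ?m)) w + (q^3 - inverse q) * unit_vec (incA (incA ?m)) w)"
      unfolding Suc.IH by (simp add: shift_linear)
    have f1: "lin (actB q) (actC q (incA ?m)) = (\<lambda>w. inverse q ^ 2 * lin (actB q) (shift incA (actC q ?m)) w
        + (1 - inverse q ^ 2) * lin (actB q) (unit_vec (incS ?m)) w - (q - inverse q ^ 3) * lin (actB q) (actB q ?m) w)"
      by (simp only: actC_incA) (simp add: lin_linear)
    have f2: "lin (actB q) (shift incA (actC q ?m)) = (\<lambda>w. q^2 * shift incA (lin (actB q) (actC q ?m)) w
        - (q^2 - 1) * shift incT (actC q ?m) w + (q^3 - inverse q) * lin (actC q) (actC q ?m) w)"
      by (simp add: lin_actB_shift_incA)
    have g: "incA ?m = (Suc i, j, k, r, s, t)" "incR (incA ?m) = incA (incR ?m)" by simp_all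
    show ?case
      unfolding g(1)[symmetric] g(2)
      by (rule ext) (simp only: e1 e2 e3 f1 f2 lin_unit_vec actBC_inc_central, use assms in \<open>simp add: field_simps\<close>)
  qed
qed

lemma actC_actB_lin:
  assumes "q \<noteq> 0" "fin v"
  shows "lin (actC q) (lin (actB q) v) = (\<lambda>w. q^2 * lin (actB q) (lin (actC q) v) w
      - (q^2 - 1) * shift incR v w + (q^3 - inverse q) * shift incA v w)"
proof -
  have "lin (actC q) (lin (actB q) v) = lin (\<lambda>m. lin (actC q) (actB q m)) v"
    using assms by (simp add: lin_lin)
  also have "\<dots> = (\<lambda>w. q^2 * lin (\<lambda>m. lin (actB q) (actC q m)) v w
      - (q^2 - 1) * lin (\<lambda>m. unit_vec (incR m)) v w + (q^3 - inverse q) * lin (\<lambda>m. unit_vec (incA m)) v w)"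
    by (simp only: actC_actB[OF assms(1)] lin_family_linear)
  finally show ?thesis using assms by (simp add: lin_lin flip: shift_def)
qed

section \<open>An action of the free algebra\<close>

primrec gen_coeffs :: "'k::field \<Rightarrow> gen \<Rightarrow> idx \<Rightarrow> idx \<Rightarrow> 'k" where
  "gen_coeffs q GA = (\<lambda>m. unit_vec (incA m))"
| "gen_coeffs q GB = actB q"
| "gen_coeffs q GC = actC q"

primrec word_act :: "'k::field \<Rightarrow> gen list \<Rightarrow> (idx \<Rightarrow> 'k) \<Rightarrow> idx \<Rightarrow> 'k" where
  "word_act q [] v = v"
| "word_act q (x # u) v = lin (gen_coeffs q x) (word_act q u v)"

definition fa_act :: "'k::field \<Rightarrow> 'k fa \<Rightarrow> (idx \<Rightarrow> 'k) \<Rightarrow> idx \<Rightarrow> 'k" where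
  "fa_act q f v = lin (\<lambda>u. word_act q u v) f"

lemma fin_gen_coeffs [simp]: "fin (gen_coeffs q x m)"
  by (cases x) auto

lemma fin_word_act [simp]: "fin v \<Longrightarrow> fin (word_act q u v)"
  by (induction u) auto

lemma fin_fa_act [simp]: "fin f \<Longrightarrow> fin v \<Longrightarrow> fin (fa_act q f v)"
  unfolding fa_act_def by simp

lemma word_act_append: "word_act q (u @ u') v = word_act q u (word_act q u' v)"
  by (induction u) auto

lemma word_act_lin: "fin c \<Longrightarrow> (\<And>a. fin (G a)) \<Longrightarrow> word_act q u (lin G c) = lin (\<lambda>a. word_act q u (G a)) c"
  by (induction u) (simp_all add: lin_lin)

lemma fa_act_lin: "fin c \<Longrightarrow> (\<And>a. fin (H a)) \<Longrightarrow> fa_act q (lin H c) v = lin (\<lambda>a. fa_act q (H a) v) c"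
  unfolding fa_act_def by (simp add: lin_lin)

lemma fa_act_unit_vec [simp]: "fa_act q (unit_vec u) v = word_act q u v"
  by (simp add: fa_act_def)

lemma fa_act_mul:
  assumes "fin f" "fin g" "fin v"
  shows "fa_act q (fa_mul f g) v = fa_act q f (fa_act q g v)"
proof -
  have "fa_act q (fa_mul f g) v = lin (\<lambda>u. lin (\<lambda>u'. word_act q u (word_act q u' v)) g) f"
    using assms by (simp add: fa_mul_eq_lin fa_act_lin word_act_append)
  also have "\<dots> = fa_act q f (fa_act q g v)"
    unfolding fa_act_def using assms by (simp add: word_act_lin)
  finally show ?thesis .
qed

lemma fa_act_add: "fin f \<Longrightarrow> fin g \<Longrightarrow> fa_act q (fa_add f g) v = (\<lambda>y. fa_act q f v y + fa_act q g v y)"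
  and fa_act_diff: "fin f \<Longrightarrow> fin g \<Longrightarrow> fa_act q (fa_diff f g) v = (\<lambda>y. fa_act q f v y - fa_act q g v y)"
  and fa_act_smul: "fa_act q (fa_smul c f) v = (\<lambda>y. c * fa_act q f v y)"
  unfolding fa_act_def fa_add_def fa_diff_def fa_smul_def by (simp_all add: lin_linear)

lemma fa_act_zero [simp]: "fa_act q (\<lambda>_. 0) v = (\<lambda>_. 0)"
  by (simp add: fa_act_def)

lemma word_act_zero [simp]: "word_act q u (\<lambda>_. 0) = (\<lambda>_. 0)"
  by (induction u) auto

lemma fa_act_zero_vector [simp]: "fa_act q f (\<lambda>_. 0) = (\<lambda>_. 0)"
  by (simp add: fa_act_def lin_def)

lemma fa_act_one [simp]: "fa_act q fa_one v = v"
  by (simp add: fa_one_eq_unit_vec)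

lemma fa_act_gen: "fa_act q (fa_gen x) v = lin (gen_coeffs q x) v"
  by (simp add: fa_gen_eq_unit_vec)

lemma fa_act_sum:
  "finite T \<Longrightarrow> (\<And>s. fin (g s)) \<Longrightarrow> fa_act q (\<lambda>w. \<Sum>s\<in>T. c s * g s w) v = (\<lambda>y. \<Sum>s\<in>T. c s * fa_act q (g s) v y)"
proof (induction T rule: finite_induct)
  case (insert x F)
  have "(\<lambda>w. \<Sum>s\<in>insert x F. c s * g s w) = fa_add (fa_smul (c x) (g x)) (\<lambda>w. \<Sum>s\<in>F. c s * g s w)"
    using insert by (simp add: fa_add_def fa_smul_def)
  then show ?case using insert by (simp add: fa_act_add fa_act_smul fin_sum)
qed simp

lemma fa_act_central:
  assumes "fin X" "fin Y" "fin Z" "fin v"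
  shows "fa_act q (aw_central q X Y Z) v = (\<lambda>w. (q + inverse q) * (fa_act q X v w
      + inverse (q^2 - inverse q ^ 2) * (q * fa_act q Y (fa_act q Z v) w - inverse q * fa_act q Z (fa_act q Y v) w)))"
  using assms by (simp add: aw_central_def fa_act_add fa_act_diff fa_act_smul fa_act_mul)

lemma q_plus_inverse_nonzero: "q \<noteq> 0 \<Longrightarrow> q ^ 4 \<noteq> 1 \<Longrightarrow> (q::'k::field) + inverse q \<noteq> 0"
  and q_square_diff_nonzero: "q \<noteq> 0 \<Longrightarrow> q ^ 4 \<noteq> 1 \<Longrightarrow> (q::'k::field) ^ 2 - inverse q ^ 2 \<noteq> 0"
proof -
  assume q: "q \<noteq> 0" "q ^ 4 \<noteq> 1"
  have "(q^2 - 1) * (q^2 + 1) \<noteq> 0"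
    using q(2) by (simp add: algebra_simps flip: power_add)
  moreover have "q * (q + inverse q) = q^2 + 1" "q^2 * (q^2 - inverse q ^ 2) = (q^2 - 1) * (q^2 + 1)"
    using q(1) by (simp_all add: field_simps power2_eq_square)
  ultimately show "q + inverse q \<noteq> 0" "q ^ 2 - inverse q ^ 2 \<noteq> 0" by auto
qed

lemma central_coeff_identities:
  fixes q :: "'k::field"
  assumes "q \<noteq> 0" "q ^ 4 \<noteq> 1"
  shows "(q + inverse q) * (A + inverse (q^2 - inverse q ^ 2)
           * (q * X - inverse q * (q^2 * X - (q^2 - 1) * R + (q^3 - inverse q) * A))) = R"
    and "(q + inverse q) * (B + inverse (q^2 - inverse q ^ 2)
           * (q * (inverse q ^ 2 * Y + (1 - inverse q ^ 2) * S - (q - inverse q ^ 3) * B) - inverse q * Y)) = S"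
  using assms q_plus_inverse_nonzero[OF assms] q_square_diff_nonzero[OF assms]
  by (simp_all add: field_simps power2_eq_square power3_eq_cube)

lemma fa_act_A [simp]: "fa_act q AWA v = shift incA v"
  and fa_act_B [simp]: "fa_act q AWB v = lin (actB q) v"
  and fa_act_C [simp]: "fa_act q AWC v = lin (actC q) v"
  by (simp_all add: fa_act_gen flip: shift_def)

lemma fa_act_alpha:
  assumes q: "q \<noteq> 0" "q ^ 4 \<noteq> 1" and v: "fin v"
  shows "fa_act q (aw_alpha q) v = shift incR v"
proof -
  have "fa_act q (aw_alpha q) v = (\<lambda>w. (q + inverse q) * (shift incA v w + inverse (q^2 - inverse q ^ 2)
      * (q * lin (actB q) (lin (actC q) v) w - inverse q * lin (actC q) (lin (actB q) v) w)))"
    using v by (simp add: aw_alpha_def fa_act_central)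
  also have "\<dots> = shift incR v"
    by (rule ext) (simp only: actC_actB_lin[OF q(1) v] central_coeff_identities[OF q])
  finally show ?thesis .
qed

lemma fa_act_beta:
  assumes q: "q \<noteq> 0" "q ^ 4 \<noteq> 1" and v: "fin v"
  shows "fa_act q (aw_beta q) v = shift incS v"
proof -
  have "fa_act q (aw_beta q) v = (\<lambda>w. (q + inverse q) * (lin (actB q) v w + inverse (q^2 - inverse q ^ 2)
      * (q * lin (actC q) (shift incA v) w - inverse q * shift incA (lin (actC q) v) w)))"
    using v by (simp add: aw_beta_def fa_act_central)
  also have "\<dots> = shift incS v"
    by (rule ext) (simp only: lin_actC_shift_incA[OF v] central_coeff_identities[OF q])
  finally show ?thesis .
qed

lemma fa_act_gamma:
  assumes q: "q \<noteq> 0" "q ^ 4 \<noteq> 1" and v: "fin v"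
  shows "fa_act q (aw_gamma q) v = shift incT v"
proof -
  have "fa_act q (aw_gamma q) v = (\<lambda>w. (q + inverse q) * (lin (actC q) v w + inverse (q^2 - inverse q ^ 2)
      * (q * shift incA (lin (actB q) v) w - inverse q * lin (actB q) (shift incA v) w)))"
    using v by (simp add: aw_gamma_def fa_act_central)
  also have "\<dots> = shift incT v"
    by (rule ext) (simp only: lin_actB_shift_incA[OF v] central_coeff_identities[OF q])
  finally show ?thesis .
qed

lemma lin_gen_coeffs_shift_central:
  "fin v \<Longrightarrow> lin (gen_coeffs q x) (shift (inc_central a b c) v) = shift (inc_central a b c) (lin (gen_coeffs q x) v)"
  by (cases x) (simp_all add: lin_shift_commute actBC_inc_central shift_incA_inc_central flip: shift_def)

lemma fa_act_rel:
  assumes q: "q \<noteq> 0" "q ^ 4 \<noteq> 1" and r: "r \<in> aw_rels q" and v: "fin v"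
  shows "fa_act q r v = (\<lambda>_. 0)"
proof -
  obtain x z where xz: "r = fa_diff (fa_mul x z) (fa_mul z x)" "x \<in> {AWA, AWB, AWC}"
    "z \<in> {aw_alpha q, aw_beta q, aw_gamma q}" using r unfolding aw_rels_def by blast
  obtain g where g: "x = fa_gen g" using xz(2) by blast
  have "fa_act q x (fa_act q z v) = fa_act q z (fa_act q x v)"
    using xz(3) q v
    by (auto simp: g fa_act_gen fa_act_alpha fa_act_beta fa_act_gamma lin_gen_coeffs_shift_central)
  then show ?thesis using v xz(3) by (auto simp: xz(1) g fa_act_diff fa_act_mul)
qed

lemma fa_act_ideal:
  assumes q: "q \<noteq> 0" "q ^ 4 \<noteq> 1" and f: "f \<in> aw_ideal q"
  shows "fin f \<and> (\<forall>v. fin v \<longrightarrow> fa_act q f v = (\<lambda>_. 0))"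
proof -
  let ?V = "{f. fin f \<and> (\<forall>v. fin v \<longrightarrow> fa_act q f v = (\<lambda>_. 0))}"
  have "fa_subspace ?V"
    unfolding fa_subspace_def by (auto simp: fa_act_add fa_act_smul)
  moreover have "aw_ideal_gens q \<subseteq> ?V"
  proof
    fix y assume "y \<in> aw_ideal_gens q"
    then obtain a r b where y: "y = fa_mul (fa_mul a r) b" "fin a" "fin b" "r \<in> aw_rels q"
      by (auto simp: fa_poly_iff_fin)
    have "fin r" using y(4) unfolding aw_rels_def by auto
    then show "y \<in> ?V" using y fa_act_rel[OF q y(4)] by (auto simp: fa_act_mul)
  qed
  ultimately show ?thesis using fa_span_least f unfolding aw_ideal_def by blast
qed

section \<open>Independence\<close>

lemma fa_act_pow_Suc: "fin X \<Longrightarrow> fin v \<Longrightarrow> fa_act q (fa_pow X (Suc n)) v = fa_act q X (fa_act q (fa_pow X n) v)"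
  by (simp add: fa_act_mul)

lemma fa_act_pow_A: "fa_act q (fa_pow AWA n) (unit_vec (a, b, c, d, e, f)) = unit_vec (a + n, b, c, d, e, f)"
  and fa_act_pow_B: "fa_act q (fa_pow AWB n) (unit_vec (0, b, c, d, e, f)) = unit_vec (0, b + n, c, d, e, f)"
  and fa_act_pow_C: "fa_act q (fa_pow AWC n) (unit_vec (0, 0, c, d, e, f)) = unit_vec (0, 0, c + n, d, e, f)"
  by (induction n) (simp_all add: fa_act_pow_Suc del: fa_pow.simps(2))

lemma
  assumes "q \<noteq> 0" "q ^ 4 \<noteq> 1"
  shows fa_act_pow_alpha: "fa_act q (fa_pow (aw_alpha q) n) (unit_vec (a, b, c, d, e, f)) = unit_vec (a, b, c, d + n, e, f)"
    and fa_act_pow_beta: "fa_act q (fa_pow (aw_beta q) n) (unit_vec (a, b, c, d, e, f)) = unit_vec (a, b, c, d, e + n, f)"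
    and fa_act_pow_gamma: "fa_act q (fa_pow (aw_gamma q) n) (unit_vec (a, b, c, d, e, f)) = unit_vec (a, b, c, d, e, f + n)"
  by (induction n)
    (simp_all add: fa_act_pow_Suc fa_act_alpha[OF assms] fa_act_beta[OF assms] fa_act_gamma[OF assms]
      del: fa_pow.simps(2))

lemma fin_aw_mono [simp]: "fin (aw_mono q m)"
  by (cases m) (simp add: aw_mono_def)

lemma fa_act_aw_mono:
  assumes "q \<noteq> 0" "q ^ 4 \<noteq> 1"
  shows "fa_act q (aw_mono q m) (unit_vec (0, 0, 0, 0, 0, 0)) = unit_vec m"
proof -
  obtain i j k r s t where m: "m = (i, j, k, r, s, t)" by (cases m)
  show ?thesis
    by (simp add: m aw_mono_def fa_act_mul fa_act_pow_A fa_act_pow_B fa_act_pow_C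
          fa_act_pow_alpha[OF assms] fa_act_pow_beta[OF assms] fa_act_pow_gamma[OF assms] del: fa_pow.simps)
qed

lemma aw_mono_independent:
  assumes q: "q \<noteq> 0" "q ^ 4 \<noteq> 1"
    and ideal: "(\<lambda>w. \<Sum>m\<in>idx_le n. c m * aw_mono q m w) \<in> aw_ideal q" and m0: "m0 \<in> idx_le n"
  shows "c m0 = 0"
proof -
  have "fa_act q (\<lambda>w. \<Sum>m\<in>idx_le n. c m * aw_mono q m w) (unit_vec (0, 0, 0, 0, 0, 0)) = (\<lambda>_. 0)"
    using fa_act_ideal[OF q ideal] by simp
  then have "(\<lambda>y. \<Sum>m\<in>idx_le n. c m * unit_vec m y) = (\<lambda>_. 0)"
    by (simp add: fa_act_sum finite_idx_le fa_act_aw_mono[OF q])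
  then have "(\<Sum>m\<in>idx_le n. c m * unit_vec m m0) = 0" by (rule fun_cong)
  moreover have "(\<Sum>m\<in>idx_le n. c m * unit_vec m m0) = c m0"
    using m0 finite_idx_le by (simp add: unit_vec_def if_distrib[of "\<lambda>x. c _ * x"] cong: if_cong)
  ultimately show ?thesis by simp
qed

section \<open>Spanning\<close>

lemma fa_mul_mem_aw_D: "h \<in> aw_D1 q \<Longrightarrow> k \<in> aw_D q n \<Longrightarrow> fa_mul h k \<in> aw_D q (Suc n)"
  by (auto intro!: fa_span_base)

lemma generators_mem_aw_D1:
  "fa_one \<in> aw_D1 q" "AWA \<in> aw_D1 q" "AWB \<in> aw_D1 q" "AWC \<in> aw_D1 q"
  "aw_alpha q \<in> aw_D1 q" "aw_beta q \<in> aw_D1 q" "aw_gamma q \<in> aw_D1 q"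
  unfolding aw_D1_def by (auto intro: fa_span_base)

lemma fa_one_mem_aw_D: "fa_one \<in> aw_D q n"
proof (induction n)
  case (Suc n)
  then show ?case using fa_mul_mem_aw_D[OF generators_mem_aw_D1(1) Suc] by simp
qed (simp add: fa_span_base)

lemma aw_D_mono: "n \<le> n' \<Longrightarrow> k \<in> aw_D q n \<Longrightarrow> k \<in> aw_D q n'"
proof (induction n' rule: dec_induct)
  case (step n')
  then have "fa_mul fa_one k \<in> aw_D q (Suc n')"
    using fa_mul_mem_aw_D generators_mem_aw_D1(1) by blast
  then show ?case by simp
qed

lemma fa_mul_pow_mem_aw_D: "X \<in> aw_D1 q \<Longrightarrow> Y \<in> aw_D q n \<Longrightarrow> fa_mul (fa_pow X i) Y \<in> aw_D q (i + n)"
proof (induction i)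
  case (Suc i)
  then have "fa_mul X (fa_mul (fa_pow X i) Y) \<in> aw_D q (Suc (i + n))" by (intro fa_mul_mem_aw_D) auto
  then show ?case by (simp add: fa_mul_assoc)
qed simp

lemma aw_mono_mem_aw_D: "aw_mono q m \<in> aw_D q (deg m)"
proof -
  obtain i j k r s t where m: "m = (i, j, k, r, s, t)" by (cases m)
  have "fa_pow (aw_gamma q) t \<in> aw_D q t"
    using fa_mul_pow_mem_aw_D[OF generators_mem_aw_D1(7) fa_one_mem_aw_D[of q 0]] by simp
  then show ?thesis
    unfolding m aw_mono_def by (auto simp: add.assoc intro!: fa_mul_pow_mem_aw_D generators_mem_aw_D1)
qed

abbreviation aw_commutes :: "'k::field \<Rightarrow> 'k fa \<Rightarrow> 'k fa \<Rightarrow> bool" where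
  "aw_commutes q z x \<equiv> aw_cong q (fa_mul z x) (fa_mul x z)"

lemma aw_commutes_mul:
  assumes "fin z" "fin x" "fin y" "aw_commutes q z x" "aw_commutes q z y"
  shows "aw_commutes q z (fa_mul x y)"
proof -
  have "aw_cong q (fa_mul (fa_mul z x) y) (fa_mul (fa_mul x z) y)" by (rule aw_cong_mul_right[OF assms(3,4)])
  moreover have "aw_cong q (fa_mul x (fa_mul z y)) (fa_mul x (fa_mul y z))" by (rule aw_cong_mul_left[OF assms(2,5)])
  ultimately show ?thesis by (simp add: fa_mul_assoc aw_cong_trans)
qed

lemma aw_commutes_add: "aw_commutes q z x \<Longrightarrow> aw_commutes q z y \<Longrightarrow> aw_commutes q z (fa_add x y)"
  and aw_commutes_diff: "aw_commutes q z x \<Longrightarrow> aw_commutes q z y \<Longrightarrow> aw_commutes q z (fa_diff x y)"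
  and aw_commutes_smul: "aw_commutes q z x \<Longrightarrow> aw_commutes q z (fa_smul c x)"
  by (simp_all add: fa_mul_add_left fa_mul_add_right fa_mul_diff_left fa_mul_diff_right
      fa_mul_smul_left fa_mul_smul_right aw_cong_add aw_cong_diff aw_cong_smul)

lemma aw_commutes_pow: "fin z \<Longrightarrow> fin x \<Longrightarrow> aw_commutes q z x \<Longrightarrow> aw_commutes q z (fa_pow x n)"
  by (induction n) (simp_all add: aw_cong_refl aw_commutes_mul)

lemma aw_commutes_central:
  "fin z \<Longrightarrow> fin X \<Longrightarrow> fin Y \<Longrightarrow> fin Z \<Longrightarrow> aw_commutes q z X \<Longrightarrow> aw_commutes q z Y \<Longrightarrow> aw_commutes q z Z
    \<Longrightarrow> aw_commutes q z (aw_central q X Y Z)"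
  unfolding aw_central_def by (intro aw_commutes_smul aw_commutes_add aw_commutes_diff aw_commutes_mul) auto

definition aw_centrals :: "'k::field \<Rightarrow> 'k fa set" where
  "aw_centrals q = {aw_alpha q, aw_beta q, aw_gamma q}"

lemma fin_aw_centrals: "z \<in> aw_centrals q \<Longrightarrow> fin z"
  by (auto simp: aw_centrals_def)

lemma aw_commutes_gen: "z \<in> aw_centrals q \<Longrightarrow> aw_commutes q z (fa_gen g)"
proof -
  assume "z \<in> aw_centrals q"
  then have "fa_diff (fa_mul (fa_gen g) z) (fa_mul z (fa_gen g)) \<in> aw_rels q"
    unfolding aw_rels_def aw_centrals_def by (cases g) blast+
  then show ?thesis unfolding aw_cong_def by (rule aw_cong_sym[unfolded aw_cong_def, OF aw_rels_in_ideal])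
qed

lemma aw_commutes_centrals:
  assumes z: "z \<in> aw_centrals q" and z': "z' \<in> aw_centrals q"
  shows "aw_commutes q z z'"
proof -
  have "aw_commutes q z (aw_central q (fa_gen x) (fa_gen y) (fa_gen u))" for x y u
    using z by (intro aw_commutes_central aw_commutes_gen) (auto simp: fin_aw_centrals)
  then show ?thesis using z' by (auto simp: aw_centrals_def aw_alpha_def aw_beta_def aw_gamma_def)
qed

lemma aw_cong_push:
  assumes "fin z" "fin X" "fin Y" "aw_commutes q z X" "aw_cong q (fa_mul z Y) Y'"
  shows "aw_cong q (fa_mul z (fa_mul X Y)) (fa_mul X Y')"
proof -
  have "aw_cong q (fa_mul (fa_mul z X) Y) (fa_mul (fa_mul X z) Y)" by (rule aw_cong_mul_right[OF assms(3,4)])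
  moreover have "aw_cong q (fa_mul X (fa_mul z Y)) (fa_mul X Y')" by (rule aw_cong_mul_left[OF assms(2,5)])
  ultimately show ?thesis by (simp add: fa_mul_assoc aw_cong_trans)
qed

lemma aw_cong_push_pow:
  assumes z: "z \<in> aw_centrals q" and z': "z' \<in> aw_centrals q \<union> {AWA, AWB, AWC}"
    and Y: "fin Y" and h: "aw_cong q (fa_mul z Y) Y'"
  shows "aw_cong q (fa_mul z (fa_mul (fa_pow z' n) Y)) (fa_mul (fa_pow z' n) Y')"
proof -
  have "fin z'" using z' by (auto simp: aw_centrals_def)
  moreover have "aw_commutes q z z'" using z z' by (auto intro: aw_commutes_centrals aw_commutes_gen)
  moreover have "fin z" using z by (rule fin_aw_centrals)
  ultimately show ?thesis by (intro aw_cong_push[OF _ _ Y _ h] aw_commutes_pow fin_fa_pow)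
qed

lemma aw_mul_central_aw_mono:
  "aw_cong q (fa_mul (aw_alpha q) (aw_mono q m)) (aw_mono q (incR m))"
  "aw_cong q (fa_mul (aw_beta q) (aw_mono q m)) (aw_mono q (incS m))"
  "aw_cong q (fa_mul (aw_gamma q) (aw_mono q m)) (aw_mono q (incT m))"
proof -
  obtain i j k r s t where m: "m = (i, j, k, r, s, t)" by (cases m)
  have push: "aw_cong q (fa_mul z (fa_mul (fa_pow AWA i) (fa_mul (fa_pow AWB j) (fa_mul (fa_pow AWC k) Y))))
                (fa_mul (fa_pow AWA i) (fa_mul (fa_pow AWB j) (fa_mul (fa_pow AWC k) Y')))"
    if "z \<in> aw_centrals q" "fin Y" "aw_cong q (fa_mul z Y) Y'" for z Y Y'
    using that by (intro aw_cong_push_pow) auto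
  have c: "aw_alpha q \<in> aw_centrals q" "aw_beta q \<in> aw_centrals q" "aw_gamma q \<in> aw_centrals q"
    by (simp_all add: aw_centrals_def)
  let ?B = "fa_mul (fa_pow (aw_beta q) s) (fa_pow (aw_gamma q) t)"
  have "aw_cong q (fa_mul (aw_alpha q) (fa_mul (fa_pow (aw_alpha q) r) ?B)) (fa_mul (fa_pow (aw_alpha q) (Suc r)) ?B)"
    by (rule aw_cong_eqI) (simp add: fa_mul_assoc)
  from push[OF c(1) _ this] show "aw_cong q (fa_mul (aw_alpha q) (aw_mono q m)) (aw_mono q (incR m))"
    by (simp add: m aw_mono_def)
  have "aw_cong q (fa_mul (aw_beta q) ?B) (fa_mul (fa_pow (aw_beta q) (Suc s)) (fa_pow (aw_gamma q) t))"
    by (rule aw_cong_eqI) (simp add: fa_mul_assoc)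
  then have "aw_cong q (fa_mul (aw_beta q) (fa_mul (fa_pow (aw_alpha q) r) ?B))
      (fa_mul (fa_pow (aw_alpha q) r) (fa_mul (fa_pow (aw_beta q) (Suc s)) (fa_pow (aw_gamma q) t)))"
    using c by (intro aw_cong_push_pow) auto
  from push[OF c(2) _ this] show "aw_cong q (fa_mul (aw_beta q) (aw_mono q m)) (aw_mono q (incS m))"
    by (simp add: m aw_mono_def)
  have g1: "aw_cong q (fa_mul (aw_gamma q) (fa_pow (aw_gamma q) t)) (fa_pow (aw_gamma q) (Suc t))"
    by (rule aw_cong_eqI) simp
  have g2: "aw_cong q (fa_mul (aw_gamma q) ?B) (fa_mul (fa_pow (aw_beta q) s) (fa_pow (aw_gamma q) (Suc t)))"
    by (rule aw_cong_push_pow[OF c(3) _ _ g1]) (simp_all add: c)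
  have "aw_cong q (fa_mul (aw_gamma q) (fa_mul (fa_pow (aw_alpha q) r) ?B))
      (fa_mul (fa_pow (aw_alpha q) r) (fa_mul (fa_pow (aw_beta q) s) (fa_pow (aw_gamma q) (Suc t))))"
    by (rule aw_cong_push_pow[OF c(3) _ _ g2]) (simp_all add: c)
  from push[OF c(3) _ this] show "aw_cong q (fa_mul (aw_gamma q) (aw_mono q m)) (aw_mono q (incT m))"
    by (simp add: m aw_mono_def)
qed

lemma q_commutation_solve:
  fixes q :: "'k::field"
  assumes "q \<noteq> 0" "q ^ 4 \<noteq> 1"
    and G: "G = (q + inverse q) * (Z + inverse (q^2 - inverse q ^ 2) * (q * XY - inverse q * YX))"
  shows "YX = q^2 * XY - (q^2 - 1) * G + (q^3 - inverse q) * Z"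
    and "XY = inverse q ^ 2 * YX + (1 - inverse q ^ 2) * G - (q - inverse q ^ 3) * Z"
  using assms(1) q_plus_inverse_nonzero[OF assms(1,2)] q_square_diff_nonzero[OF assms(1,2)]
  unfolding G by (simp_all add: field_simps power2_eq_square power3_eq_cube)

lemma fa_mul_B_A:
  assumes "q \<noteq> 0" "q ^ 4 \<noteq> 1"
  shows "fa_mul AWB AWA = (\<lambda>w. q^2 * fa_mul AWA AWB w - (q^2 - 1) * aw_gamma q w + (q^3 - inverse q) * AWC w)"
  by (rule ext, rule q_commutation_solve(1)[OF assms])
    (simp add: aw_gamma_def aw_central_def fa_smul_def fa_add_def fa_diff_def)

lemma fa_mul_C_A:
  assumes "q \<noteq> 0" "q ^ 4 \<noteq> 1"
  shows "fa_mul AWC AWA = (\<lambda>w. inverse q ^ 2 * fa_mul AWA AWC w + (1 - inverse q ^ 2) * aw_beta q w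
      - (q - inverse q ^ 3) * AWB w)"
  by (rule ext, rule q_commutation_solve(2)[OF assms])
    (simp add: aw_beta_def aw_central_def fa_smul_def fa_add_def fa_diff_def)

lemma fa_mul_C_B:
  assumes "q \<noteq> 0" "q ^ 4 \<noteq> 1"
  shows "fa_mul AWC AWB = (\<lambda>w. q^2 * fa_mul AWB AWC w - (q^2 - 1) * aw_alpha q w + (q^3 - inverse q) * AWA w)"
  by (rule ext, rule q_commutation_solve(1)[OF assms])
    (simp add: aw_alpha_def aw_central_def fa_smul_def fa_add_def fa_diff_def)

lemma fa_mul_A_aw_mono: "fa_mul AWA (aw_mono q m) = aw_mono q (incA m)"
  by (cases m) (simp add: aw_mono_def fa_mul_assoc[symmetric])

lemma fa_mul_B_aw_mono: "fa_mul AWB (aw_mono q (0, j, k, r, s, t)) = aw_mono q (0, Suc j, k, r, s, t)"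
  by (simp add: aw_mono_def fa_mul_assoc[symmetric])

lemma fa_mul_C_aw_mono: "fa_mul AWC (aw_mono q (0, 0, k, r, s, t)) = aw_mono q (0, 0, Suc k, r, s, t)"
  by (simp add: aw_mono_def fa_mul_assoc[symmetric])

lemma fa_mul_A_lin_aw_mono: "fin u \<Longrightarrow> fa_mul AWA (lin (aw_mono q) u) = lin (aw_mono q) (shift incA u)"
  by (simp add: fa_mul_lin_right fa_mul_A_aw_mono lin_shift)

lemma aw_cong_B_aw_mono_incA:
  assumes q: "q \<noteq> 0" "q ^ 4 \<noteq> 1"
    and B: "aw_cong q (fa_mul AWB (aw_mono q m)) (lin (aw_mono q) (actB q m))"
    and C: "aw_cong q (fa_mul AWC (aw_mono q m)) (lin (aw_mono q) (actC q m))"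
  shows "aw_cong q (fa_mul AWB (aw_mono q (incA m))) (lin (aw_mono q) (actB q (incA m)))"
proof -
  have "fa_mul AWB (aw_mono q (incA m)) = fa_mul (fa_mul AWB AWA) (aw_mono q m)"
    by (simp only: fa_mul_A_aw_mono[symmetric] fa_mul_assoc)
  also have "\<dots> = (\<lambda>w. q^2 * fa_mul AWA (fa_mul AWB (aw_mono q m)) w
      - (q^2 - 1) * fa_mul (aw_gamma q) (aw_mono q m) w + (q^3 - inverse q) * fa_mul AWC (aw_mono q m) w)"
    by (simp only: fa_mul_B_A[OF q] fa_mul_comb3(1) fa_mul_assoc)
  finally have BA: "fa_mul AWB (aw_mono q (incA m)) = \<dots>" .
  have "lin (aw_mono q) (actB q (incA m)) = (\<lambda>w. q^2 * fa_mul AWA (lin (aw_mono q) (actB q m)) w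
      - (q^2 - 1) * aw_mono q (incT m) w + (q^3 - inverse q) * lin (aw_mono q) (actC q m) w)"
    by (simp add: actB_incA lin_linear fa_mul_A_lin_aw_mono)
  then show ?thesis
    unfolding BA by (simp only: aw_cong_comb3(1)[OF aw_cong_mul_left[OF fin_fa_gen B] aw_mul_central_aw_mono(3) C])
qed

lemma aw_cong_C_aw_mono_incA:
  assumes q: "q \<noteq> 0" "q ^ 4 \<noteq> 1"
    and B: "aw_cong q (fa_mul AWB (aw_mono q m)) (lin (aw_mono q) (actB q m))"
    and C: "aw_cong q (fa_mul AWC (aw_mono q m)) (lin (aw_mono q) (actC q m))"
  shows "aw_cong q (fa_mul AWC (aw_mono q (incA m))) (lin (aw_mono q) (actC q (incA m)))"
proof -
  have "fa_mul AWC (aw_mono q (incA m)) = fa_mul (fa_mul AWC AWA) (aw_mono q m)"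
    by (simp only: fa_mul_A_aw_mono[symmetric] fa_mul_assoc)
  also have "\<dots> = (\<lambda>w. inverse q ^ 2 * fa_mul AWA (fa_mul AWC (aw_mono q m)) w
      + (1 - inverse q ^ 2) * fa_mul (aw_beta q) (aw_mono q m) w - (q - inverse q ^ 3) * fa_mul AWB (aw_mono q m) w)"
    by (simp only: fa_mul_C_A[OF q] fa_mul_comb3(2) fa_mul_assoc)
  finally have CA: "fa_mul AWC (aw_mono q (incA m)) = \<dots>" .
  have "lin (aw_mono q) (actC q (incA m)) = (\<lambda>w. inverse q ^ 2 * fa_mul AWA (lin (aw_mono q) (actC q m)) w
      + (1 - inverse q ^ 2) * aw_mono q (incS m) w - (q - inverse q ^ 3) * lin (aw_mono q) (actB q m) w)"
    by (simp add: actC_incA lin_linear fa_mul_A_lin_aw_mono)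
  then show ?thesis
    unfolding CA by (simp only: aw_cong_comb3(2)[OF aw_cong_mul_left[OF fin_fa_gen C] aw_mul_central_aw_mono(2) B])
qed

lemma aw_cong_C_aw_mono_incB:
  assumes q: "q \<noteq> 0" "q ^ 4 \<noteq> 1"
    and C: "aw_cong q (fa_mul AWC (aw_mono q (0, j, k, r, s, t))) (lin (aw_mono q) (actC q (0, j, k, r, s, t)))"
    and B: "\<And>m. actC q (0, j, k, r, s, t) m \<noteq> 0 \<Longrightarrow> aw_cong q (fa_mul AWB (aw_mono q m)) (lin (aw_mono q) (actB q m))"
  shows "aw_cong q (fa_mul AWC (aw_mono q (0, Suc j, k, r, s, t))) (lin (aw_mono q) (actC q (0, Suc j, k, r, s, t)))"
proof -
  let ?m = "(0, j, k, r, s, t)"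
  let ?u = "actC q ?m"
  have "aw_cong q (fa_mul AWB (lin (aw_mono q) ?u)) (lin (\<lambda>m. lin (aw_mono q) (actB q m)) ?u)"
    unfolding fa_mul_lin_right by (rule aw_cong_lin[OF fin_actBC B])
  then have BC: "aw_cong q (fa_mul AWB (fa_mul AWC (aw_mono q ?m))) (lin (aw_mono q) (lin (actB q) ?u))"
    by (intro aw_cong_trans[OF aw_cong_mul_left[OF fin_fa_gen C]]) (simp add: lin_lin)
  have "fa_mul AWC (aw_mono q (0, Suc j, k, r, s, t)) = fa_mul (fa_mul AWC AWB) (aw_mono q ?m)"
    by (simp only: fa_mul_B_aw_mono[symmetric] fa_mul_assoc)
  also have "\<dots> = (\<lambda>w. q^2 * fa_mul AWB (fa_mul AWC (aw_mono q ?m)) w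
      - (q^2 - 1) * fa_mul (aw_alpha q) (aw_mono q ?m) w + (q^3 - inverse q) * fa_mul AWA (aw_mono q ?m) w)"
    by (simp only: fa_mul_C_B[OF q] fa_mul_comb3(1) fa_mul_assoc)
  finally have CB: "fa_mul AWC (aw_mono q (0, Suc j, k, r, s, t)) = \<dots>" .
  have "lin (aw_mono q) (actC q (0, Suc j, k, r, s, t)) = (\<lambda>w. q^2 * lin (aw_mono q) (lin (actB q) ?u) w
      - (q^2 - 1) * aw_mono q (incR ?m) w + (q^3 - inverse q) * aw_mono q (incA ?m) w)"
    by (simp add: actC_0_Suc lin_linear)
  then show ?thesis
    unfolding CB
    by (simp only: aw_cong_comb3(1)[OF BC aw_mul_central_aw_mono(1) aw_cong_eqI[OF fa_mul_A_aw_mono]])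
qed

lemma aw_cong_BC_aw_mono:
  "q \<noteq> 0 \<Longrightarrow> q ^ 4 \<noteq> 1 \<Longrightarrow>
    aw_cong q (fa_mul (if b then AWC else AWB) (aw_mono q m)) (lin (aw_mono q) (actBC q b m))"
proof (induction q b m rule: actBC.induct)
  case (1 q j k r s t)
  show ?case by (simp add: fa_mul_B_aw_mono aw_cong_refl)
next
  case (2 q i j k r s t)
  have "aw_cong q (fa_mul AWB (aw_mono q (incA (i, j, k, r, s, t)))) (lin (aw_mono q) (actB q (incA (i, j, k, r, s, t))))"
    by (rule aw_cong_B_aw_mono_incA[OF "2.prems"]) (use "2.IH"[OF "2.prems"] in simp_all)
  then show ?case by (simp only: incA.simps if_False)
next
  case (3 q i j k r s t)
  have "aw_cong q (fa_mul AWC (aw_mono q (incA (i, j, k, r, s, t)))) (lin (aw_mono q) (actC q (incA (i, j, k, r, s, t))))"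
    by (rule aw_cong_C_aw_mono_incA[OF "3.prems"]) (use "3.IH"[OF "3.prems"] in simp_all)
  then show ?case by (simp only: incA.simps if_True)
next
  case (4 q k r s t)
  show ?case by (simp add: fa_mul_C_aw_mono aw_cong_refl)
next
  case (5 q j k r s t)
  have "(0, 0, 0, 0, 0, 0) \<in> idx_le (Suc (j + k + r + s + t))" by (simp add: idx_le_def)
  from "5.IH"(1)[OF this "5.prems"]
  have C: "aw_cong q (fa_mul AWC (aw_mono q (0, j, k, r, s, t))) (lin (aw_mono q) (actC q (0, j, k, r, s, t)))"
    by (simp only: if_True)
  have B: "aw_cong q (fa_mul AWB (aw_mono q m)) (lin (aw_mono q) (actB q m))"
    if "actC q (0, j, k, r, s, t) m \<noteq> 0" for m
  proof -
    have "m \<in> idx_le (Suc (j + k + r + s + t))"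
      using that actBC_support[of q True "(0, j, k, r, s, t)"] by auto
    from "5.IH"(2)[OF this "5.prems"] show ?thesis by (simp only: if_False)
  qed
  show ?case unfolding if_True by (rule aw_cong_C_aw_mono_incB[OF "5.prems" C]) (rule B)
qed

definition mono_span_mod :: "'k::field \<Rightarrow> nat \<Rightarrow> 'k fa set" where
  "mono_span_mod q n = {d. \<exists>c. aw_cong q d (\<lambda>w. \<Sum>m\<in>idx_le n. c m * aw_mono q m w)}"

lemma fa_subspace_mono_span_mod: "fa_subspace (mono_span_mod q n)"
  unfolding fa_subspace_def
proof (intro conjI ballI allI)
  show "(\<lambda>w. 0) \<in> mono_span_mod q n"
    unfolding mono_span_mod_def by (intro CollectI exI[of _ "\<lambda>_. 0"]) (simp add: aw_cong_refl)
next
  fix f g assume "f \<in> mono_span_mod q n" "g \<in> mono_span_mod q n"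
  then obtain c1 c2 where "aw_cong q f (\<lambda>w. \<Sum>m\<in>idx_le n. c1 m * aw_mono q m w)"
    "aw_cong q g (\<lambda>w. \<Sum>m\<in>idx_le n. c2 m * aw_mono q m w)"
    unfolding mono_span_mod_def by blast
  note aw_cong_add[OF this]
  moreover have "fa_add (\<lambda>w. \<Sum>m\<in>idx_le n. c1 m * aw_mono q m w) (\<lambda>w. \<Sum>m\<in>idx_le n. c2 m * aw_mono q m w)
      = (\<lambda>w. \<Sum>m\<in>idx_le n. (c1 m + c2 m) * aw_mono q m w)"
    by (simp add: fun_eq_iff fa_add_def algebra_simps sum.distrib)
  ultimately have "aw_cong q (fa_add f g) (\<lambda>w. \<Sum>m\<in>idx_le n. (c1 m + c2 m) * aw_mono q m w)"
    by simp
  then show "fa_add f g \<in> mono_span_mod q n"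
    unfolding mono_span_mod_def by (intro CollectI exI[where x = "\<lambda>m. c1 m + c2 m"])
next
  fix a f assume "f \<in> mono_span_mod q n"
  then obtain c where "aw_cong q f (\<lambda>w. \<Sum>m\<in>idx_le n. c m * aw_mono q m w)"
    unfolding mono_span_mod_def by blast
  note aw_cong_smul[OF this, of a]
  moreover have "fa_smul a (\<lambda>w. \<Sum>m\<in>idx_le n. c m * aw_mono q m w)
      = (\<lambda>w. \<Sum>m\<in>idx_le n. (a * c m) * aw_mono q m w)"
    by (simp add: fun_eq_iff fa_smul_def sum_distrib_left mult.assoc)
  ultimately have "aw_cong q (fa_smul a f) (\<lambda>w. \<Sum>m\<in>idx_le n. (a * c m) * aw_mono q m w)"
    by simp
  then show "fa_smul a f \<in> mono_span_mod q n"
    unfolding mono_span_mod_def by (intro CollectI exI[where x = "\<lambda>m. a * c m"])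
qed

lemma mono_span_mod_cong: "aw_cong q d d' \<Longrightarrow> d' \<in> mono_span_mod q n \<Longrightarrow> d \<in> mono_span_mod q n"
  unfolding mono_span_mod_def by (auto intro: aw_cong_trans)

lemma lin_aw_mono_mem_mono_span_mod:
  assumes "fin v" "{m. v m \<noteq> 0} \<subseteq> idx_le n"
  shows "lin (aw_mono q) v \<in> mono_span_mod q n"
proof -
  have "lin (aw_mono q) v = (\<lambda>w. \<Sum>m\<in>idx_le n. v m * aw_mono q m w)"
    by (intro ext lin_eq_sum[OF finite_idx_le assms(2)])
  then show ?thesis unfolding mono_span_mod_def by (auto intro!: aw_cong_eqI)
qed

lemma aw_mono_mem_mono_span_mod:
  assumes "deg m \<le> n"
  shows "aw_mono q m \<in> mono_span_mod q n"
proof -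
  have "{w. unit_vec m w \<noteq> 0} \<subseteq> idx_le n" using assms by (auto simp: unit_vec_def mem_idx_le_iff)
  from lin_aw_mono_mem_mono_span_mod[OF fin_unit_vec this] show ?thesis by simp
qed

lemma generator_mul_aw_mono_mem:
  assumes q: "q \<noteq> 0" "q ^ 4 \<noteq> 1"
    and X: "X \<in> {fa_one, AWA, AWB, AWC, aw_alpha q, aw_beta q, aw_gamma q}" and m: "deg m \<le> n"
  shows "fa_mul X (aw_mono q m) \<in> mono_span_mod q (Suc n)"
proof -
  have BC: "fa_mul (if b then AWC else AWB) (aw_mono q m) \<in> mono_span_mod q (Suc n)" for b
  proof (rule mono_span_mod_cong[OF aw_cong_BC_aw_mono[OF q]], rule lin_aw_mono_mem_mono_span_mod)
    show "{w. actBC q b m w \<noteq> 0} \<subseteq> idx_le (Suc n)"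
      using actBC_support[of q b m] m by (auto simp: mem_idx_le_iff)
  qed simp
  have central: "fa_mul z (aw_mono q m) \<in> mono_span_mod q (Suc n)"
    if "aw_cong q (fa_mul z (aw_mono q m)) (aw_mono q m')" "deg m' = Suc (deg m)" for z m'
    by (rule mono_span_mod_cong[OF that(1) aw_mono_mem_mono_span_mod]) (use that m in simp)
  have "deg m \<le> Suc n" using m by simp
  with X show ?thesis
  proof (elim insertE emptyE)
    assume "X = fa_one" then show ?thesis using m by (simp add: aw_mono_mem_mono_span_mod)
  next
    assume "X = AWA" then show ?thesis using m by (simp add: fa_mul_A_aw_mono aw_mono_mem_mono_span_mod)
  next
    assume "X = AWB" then show ?thesis using BC[of False] by simp
  next
    assume "X = AWC" then show ?thesis using BC[of True] by simp
  next
    assume "X = aw_alpha q" then show ?thesis using central[OF aw_mul_central_aw_mono(1)] by simp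
  next
    assume "X = aw_beta q" then show ?thesis using central[OF aw_mul_central_aw_mono(2)] by simp
  next
    assume "X = aw_gamma q" then show ?thesis using central[OF aw_mul_central_aw_mono(3)] by simp
  qed
qed

lemma generator_mul_mem_mono_span_mod:
  assumes q: "q \<noteq> 0" "q ^ 4 \<noteq> 1"
    and X: "X \<in> {fa_one, AWA, AWB, AWC, aw_alpha q, aw_beta q, aw_gamma q}" and d: "d \<in> mono_span_mod q n"
  shows "fa_mul X d \<in> mono_span_mod q (Suc n)"
proof -
  obtain c where c: "aw_cong q d (\<lambda>w. \<Sum>m\<in>idx_le n. c m * aw_mono q m w)"
    using d unfolding mono_span_mod_def by blast
  have "fin X" using X by auto
  have "(\<lambda>w. \<Sum>m\<in>idx_le n. c m * fa_mul X (aw_mono q m) w) \<in> mono_span_mod q (Suc n)"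
    by (rule fa_subspace_sum[OF fa_subspace_mono_span_mod finite_idx_le])
      (simp add: generator_mul_aw_mono_mem[OF q X] mem_idx_le_iff)
  then show ?thesis
    using mono_span_mod_cong[OF aw_cong_mul_left[OF \<open>fin X\<close> c]] by (simp add: fa_mul_sum_right)
qed

lemma aw_D1_mul_mem_mono_span_mod:
  assumes q: "q \<noteq> 0" "q ^ 4 \<noteq> 1" and h: "h \<in> aw_D1 q" and k: "k \<in> mono_span_mod q n"
  shows "fa_mul h k \<in> mono_span_mod q (Suc n)"
proof -
  have "fa_subspace {h. fa_mul h k \<in> mono_span_mod q (Suc n)}"
    using fa_subspace_mono_span_mod[of q "Suc n"] unfolding fa_subspace_def
    by (auto simp: fa_mul_zero_left fa_mul_add_left fa_mul_smul_left)
  moreover have "{fa_one, AWA, AWB, AWC, aw_alpha q, aw_beta q, aw_gamma q} \<subseteq> {h. fa_mul h k \<in> mono_span_mod q (Suc n)}"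
    using generator_mul_mem_mono_span_mod[OF q _ k] by blast
  ultimately show ?thesis using h fa_span_least unfolding aw_D1_def by blast
qed

lemma aw_D_subset_mono_span_mod:
  assumes q: "q \<noteq> 0" "q ^ 4 \<noteq> 1"
  shows "aw_D q n \<subseteq> mono_span_mod q n"
proof (induction n)
  case 0
  have "fa_one \<in> mono_span_mod q 0"
    using aw_mono_mem_mono_span_mod[of "(0, 0, 0, 0, 0, 0)" 0 q] by (simp add: aw_mono_def)
  then show ?case by (simp add: fa_span_least[OF fa_subspace_mono_span_mod])
next
  case (Suc n)
  then show ?case
    using aw_D1_mul_mem_mono_span_mod[OF q] by (auto intro!: fa_span_least[OF fa_subspace_mono_span_mod])
qed

theorem theorem5p4:
  fixes q :: "'k::field" and n :: nat
  assumes "q \<noteq> 0" and "q ^ 4 \<noteq> 1"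
  shows "(\<forall>m \<in> idx_le n. \<exists>d \<in> aw_D q n. \<exists>e \<in> aw_ideal q. aw_mono q m = fa_add d e)
       \<and> (\<forall>d \<in> aw_D q n. \<exists>c. fa_diff d (\<lambda>w. \<Sum>m\<in>idx_le n. c m * aw_mono q m w) \<in> aw_ideal q)
       \<and> (\<forall>c. (\<lambda>w. \<Sum>m\<in>idx_le n. c m * aw_mono q m w) \<in> aw_ideal q \<longrightarrow> (\<forall>m\<in>idx_le n. c m = 0))"
proof (intro conjI ballI allI impI)
  fix m assume "m \<in> idx_le n"
  then have "aw_mono q m \<in> aw_D q n"
    using aw_mono_mem_aw_D aw_D_mono by (metis mem_idx_le_iff)
  moreover have "aw_mono q m = fa_add (aw_mono q m) (\<lambda>w. 0)" by (simp add: fa_add_def)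
  ultimately show "\<exists>d \<in> aw_D q n. \<exists>e \<in> aw_ideal q. aw_mono q m = fa_add d e"
    using aw_ideal_zero by blast
next
  fix d assume "d \<in> aw_D q n"
  then show "\<exists>c. fa_diff d (\<lambda>w. \<Sum>m\<in>idx_le n. c m * aw_mono q m w) \<in> aw_ideal q"
    using aw_D_subset_mono_span_mod[OF assms] unfolding mono_span_mod_def aw_cong_def by blast
next
  fix c m assume "(\<lambda>w. \<Sum>m\<in>idx_le n. c m * aw_mono q m w) \<in> aw_ideal q" "m \<in> idx_le n"
  then show "c m = 0" by (rule aw_mono_independent[OF assms])
qed

end
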